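(* For any non-splitting CSS code, none of the gates $H$, $PH$, $HP$ (single-qubit) and $\mathsf{CNOT}$ (two-qubit) is $1$-local-Clifford partially addressable.
   Context: A CSS code $\mathsf{CSS}(A,B)$ on $n$ qubits is given by subspaces $A,B\subseteq\mathbb{F}_2^n$ with $a\cdot b=0$ for all $a\in A,b\in B$; its codespace is the common $+1$-eigenspace of all $X^a$ ($a\in A$) and $Z^b$ ($b\in B$), where $G^a=\bigotimes_{i:a_i=1}G_i$. A logical operator is a unitary preserving the codespace. A subspace $A\subseteq\mathbb{F}_2^n$ splits on a non-empty $h\subsetneq\{1,\dots,n\}$ if $A=A_1\oplus A_2$ with $A_1$ having support $h$ and $A_2$ supported on the complement of $h$; the code splits on $h$ if both $A$ and $B$ do, and is non-splitting if it splits on no such $h$. $P=\mathrm{diag}(1,i)$, $H$ is Hadamard. A $1$-local Clifford circuit is a tensor product of single-qubit Clifford gates. Fix logical Pauli operators $\bar X_j,\bar Z_j$ for the $k$ logical qubits; a logical operator $G$ has logical action $\bar W$ ($W=\sum_j\alpha_jW_j$ in the Pauli basis) if $G|\psi\rangle=\sum_j\alpha_j\bar W_j|\psi\rangle$ for all codestates. A $p$-qubit unitary $U$ is $1$-local-Clifford partially addressable on the code if there exist a set $I$ of pairwise disjoint ordered $p$-tuples of logical qubits, $I\neq\emptyset$ and not covering all logical qubits, and a $1$-local Clifford circuit that is a logical operator whose logical action is $\bar U$ on each tuple of $I$ (identity on the remaining logical qubits). *)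

theory Defs
  imports Complex_Main "HOL-Library.FuncSet"
begin

section \<open>Binary vectors: subsets of {0..<n} (F_2^n, addition = symmetric difference)\<close>

definition sdiff :: "nat set \<Rightarrow> nat set \<Rightarrow> nat set" where
  "sdiff a b = (a - b) \<union> (b - a)"

definition f2_subspace :: "nat \<Rightarrow> nat set set \<Rightarrow> bool" where
  "f2_subspace n A \<longleftrightarrow> A \<subseteq> Pow {0..<n} \<and> {} \<in> A \<and> (\<forall>a\<in>A. \<forall>b\<in>A. sdiff a b \<in> A)"

definition dimF2 :: "nat set set \<Rightarrow> nat" where
  "dimF2 A = (THE d. card A = 2 ^ d)"

definition css_code :: "nat \<Rightarrow> nat set set \<Rightarrow> nat set set \<Rightarrow> bool" where
  "css_code n A B \<longleftrightarrow> f2_subspace n A \<and> f2_subspace n B \<and>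
     (\<forall>a\<in>A. \<forall>b\<in>B. even (card (a \<inter> b)))"

definition subspace_splits :: "nat \<Rightarrow> nat set set \<Rightarrow> nat set \<Rightarrow> bool" where
  "subspace_splits n A h \<longleftrightarrow> (\<exists>A1 A2. f2_subspace n A1 \<and> f2_subspace n A2 \<and>
      (\<forall>a\<in>A1. a \<subseteq> h) \<and> (\<forall>a\<in>A2. a \<subseteq> {0..<n} - h) \<and>
      A = {sdiff a1 a2 | a1 a2. a1 \<in> A1 \<and> a2 \<in> A2})"

definition code_splits :: "nat \<Rightarrow> nat set set \<Rightarrow> nat set set \<Rightarrow> nat set \<Rightarrow> bool" where
  "code_splits n A B h \<longleftrightarrow> subspace_splits n A h \<and> subspace_splits n B h"

definition non_splitting :: "nat \<Rightarrow> nat set set \<Rightarrow> nat set set \<Rightarrow> bool" where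
  "non_splitting n A B \<longleftrightarrow>
     (\<forall>h. h \<noteq> {} \<and> h \<subset> {0..<n} \<longrightarrow> \<not> code_splits n A B h)"

(* a state is a function on computational basis strings, a basis string being the set of
   qubits in state |1>; the state vanishes outside Pow {0..<n} *)
type_synonym state = "nat set \<Rightarrow> complex"

definition states :: "nat \<Rightarrow> state set" where
  "states n = {\<psi>. \<forall>x. \<not> x \<subseteq> {0..<n} \<longrightarrow> \<psi> x = 0}"

definition Xop :: "nat set \<Rightarrow> state \<Rightarrow> state" where
  "Xop a \<psi> = (\<lambda>x. \<psi> (sdiff x a))"

definition Zop :: "nat set \<Rightarrow> state \<Rightarrow> state" where
  "Zop b \<psi> = (\<lambda>x. (-1) ^ card (x \<inter> b) * \<psi> x)"

definition codespace :: "nat \<Rightarrow> nat set set \<Rightarrow> nat set set \<Rightarrow> state set" where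
  "codespace n A B = {\<psi> \<in> states n. (\<forall>a\<in>A. Xop a \<psi> = \<psi>) \<and> (\<forall>b\<in>B. Zop b \<psi> = \<psi>)}"

type_synonym gate1 = "bool \<Rightarrow> bool \<Rightarrow> complex"

(* 0 = I, 1 = X, 2 = Y, 3 = Z ; row index first, True = |1> *)
definition pauli1 :: "nat \<Rightarrow> gate1" where
  "pauli1 c = (\<lambda>a b.
     if c = 1 then (if a \<noteq> b then 1 else 0)
     else if c = 2 then (if a = b then 0 else if a then \<i> else - \<i>)
     else if c = 3 then (if a = b then (if a then -1 else 1) else 0)
     else (if a = b then 1 else 0))"

definition mmult1 :: "gate1 \<Rightarrow> gate1 \<Rightarrow> gate1" where
  "mmult1 f g = (\<lambda>a b. \<Sum>c\<in>UNIV. f a c * g c b)"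

definition adj1 :: "gate1 \<Rightarrow> gate1" where
  "adj1 f = (\<lambda>a b. cnj (f b a))"

definition unitary1 :: "gate1 \<Rightarrow> bool" where
  "unitary1 g \<longleftrightarrow> mmult1 g (adj1 g) = pauli1 0"

definition pauli_group1 :: "gate1 set" where
  "pauli_group1 = {(\<lambda>a b. c * pauli1 j a b) | c j. c \<in> {1, -1, \<i>, - \<i>} \<and> j < 4}"

definition clifford1 :: "gate1 \<Rightarrow> bool" where
  "clifford1 g \<longleftrightarrow> unitary1 g \<and>
     (\<forall>P\<in>pauli_group1. mmult1 (mmult1 g P) (adj1 g) \<in> pauli_group1)"

definition circuit :: "nat \<Rightarrow> (nat \<Rightarrow> gate1) \<Rightarrow> state \<Rightarrow> state" where
  "circuit n g \<psi> = (\<lambda>x. if x \<subseteq> {0..<n}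
       then \<Sum>y\<in>Pow {0..<n}. (\<Prod>i<n. g i (i \<in> x) (i \<in> y)) * \<psi> y else 0)"

definition one_local_clifford :: "nat \<Rightarrow> (nat \<Rightarrow> gate1) \<Rightarrow> bool" where
  "one_local_clifford n g \<longleftrightarrow> (\<forall>i<n. clifford1 (g i))"

definition logical_operator :: "nat \<Rightarrow> nat set set \<Rightarrow> nat set set \<Rightarrow> (state \<Rightarrow> state) \<Rightarrow> bool" where
  "logical_operator n A B G \<longleftrightarrow> G ` codespace n A B \<subseteq> codespace n A B"

definition num_logical :: "nat \<Rightarrow> nat set set \<Rightarrow> nat set set \<Rightarrow> nat" where
  "num_logical n A B = n - dimF2 A - dimF2 B"

(* logical X_j = X^(u j), logical Z_j = Z^(v j), j < k *)
definition css_logicals :: "nat \<Rightarrow> nat set set \<Rightarrow> nat set set \<Rightarrow> (nat \<Rightarrow> nat set) \<Rightarrow> (nat \<Rightarrow> nat set) \<Rightarrow> bool" where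
  "css_logicals n A B u v \<longleftrightarrow> (let k = num_logical n A B in
     (\<forall>j<k. u j \<subseteq> {0..<n} \<and> v j \<subseteq> {0..<n} \<and>
        (\<forall>b\<in>B. even (card (u j \<inter> b))) \<and> (\<forall>a\<in>A. even (card (v j \<inter> a)))) \<and>
     (\<forall>i<k. \<forall>j<k. odd (card (v i \<inter> u j)) \<longleftrightarrow> i = j))"

definition lpauli1 :: "nat set \<Rightarrow> nat set \<Rightarrow> nat \<Rightarrow> state \<Rightarrow> state" where
  "lpauli1 a b c \<psi> = (if c = 1 then Xop a \<psi>
      else if c = 2 then (\<lambda>x. \<i> * Xop a (Zop b \<psi>) x)
      else if c = 3 then Zop b \<psi> else \<psi>)"

(* logical version of the Pauli string s (s j \<in> {0,1,2,3} for I,X,Y,Z on logical qubit j) *)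
fun lpauli :: "(nat \<Rightarrow> nat set) \<Rightarrow> (nat \<Rightarrow> nat set) \<Rightarrow> (nat \<Rightarrow> nat) \<Rightarrow> nat \<Rightarrow> state \<Rightarrow> state" where
  "lpauli u v s 0 = id"
| "lpauli u v s (Suc j) = lpauli u v s j \<circ> lpauli1 (u j) (v j) (s j)"

(* a k-qubit matrix: entries indexed by basis strings (subsets of {0..<k}) *)
type_synonym mat = "nat set \<Rightarrow> nat set \<Rightarrow> complex"

definition pauli_strings :: "nat \<Rightarrow> (nat \<Rightarrow> nat) set" where
  "pauli_strings k = PiE {0..<k} (\<lambda>_. {0..<4})"

definition pstr :: "nat \<Rightarrow> (nat \<Rightarrow> nat) \<Rightarrow> mat" where
  "pstr k s = (\<lambda>x y. \<Prod>j<k. pauli1 (s j) (j \<in> x) (j \<in> y))"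

(* coefficient alpha_s = tr(W_s^dagger W) / 2^k *)
definition pcoef :: "nat \<Rightarrow> mat \<Rightarrow> (nat \<Rightarrow> nat) \<Rightarrow> complex" where
  "pcoef k W s = (\<Sum>x\<in>Pow {0..<k}. \<Sum>y\<in>Pow {0..<k}. cnj (pstr k s x y) * W x y) / 2 ^ k"

definition has_logical_action ::
  "nat \<Rightarrow> nat set set \<Rightarrow> nat set set \<Rightarrow> (nat \<Rightarrow> nat set) \<Rightarrow> (nat \<Rightarrow> nat set)
     \<Rightarrow> (state \<Rightarrow> state) \<Rightarrow> mat \<Rightarrow> bool" where
  "has_logical_action n A B u v G W \<longleftrightarrow> (let k = num_logical n A B in
     \<forall>\<psi>\<in>codespace n A B.
       G \<psi> = (\<lambda>x. \<Sum>s\<in>pauli_strings k. pcoef k W s * lpauli u v s k \<psi> x))"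

(* the k-qubit operator acting as the p-qubit matrix U on each ordered tuple t of I
   (qubit m of U acts on logical qubit t!m) and as the identity elsewhere *)
definition tuple_pos :: "nat list \<Rightarrow> nat set \<Rightarrow> nat set" where
  "tuple_pos t x = {m. m < length t \<and> t ! m \<in> x}"

definition on_tuples :: "nat list set \<Rightarrow> mat \<Rightarrow> mat" where
  "on_tuples I U = (\<lambda>x y. (\<Prod>t\<in>I. U (tuple_pos t x) (tuple_pos t y)) *
      (if x - \<Union>(set ` I) = y - \<Union>(set ` I) then 1 else 0))"

definition partially_addressable ::
  "nat \<Rightarrow> nat set set \<Rightarrow> nat set set \<Rightarrow> (nat \<Rightarrow> nat set) \<Rightarrow> (nat \<Rightarrow> nat set) \<Rightarrow> nat \<Rightarrow> mat \<Rightarrow> bool" where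
  "partially_addressable n A B u v p U \<longleftrightarrow> (let k = num_logical n A B in
     \<exists>I g. I \<noteq> {} \<and>
       (\<forall>t\<in>I. length t = p \<and> distinct t \<and> set t \<subseteq> {0..<k}) \<and>
       (\<forall>t\<in>I. \<forall>t'\<in>I. t \<noteq> t' \<longrightarrow> set t \<inter> set t' = {}) \<and>
       \<Union>(set ` I) \<noteq> {0..<k} \<and>
       one_local_clifford n g \<and>
       logical_operator n A B (circuit n g) \<and>
       has_logical_action n A B u v (circuit n g) (on_tuples I U))"

definition Hgate1 :: gate1 where
  "Hgate1 = (\<lambda>a b. (if a \<and> b then -1 else 1) / complex_of_real (sqrt 2))"

definition Pgate1 :: gate1 where
  "Pgate1 = (\<lambda>a b. if a = b then (if a then \<i> else 1) else 0)"

definition as_mat1 :: "gate1 \<Rightarrow> mat" where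
  "as_mat1 g = (\<lambda>x y. g (0 \<in> x) (0 \<in> y))"

definition gate_H :: mat where "gate_H = as_mat1 Hgate1"
definition gate_PH :: mat where "gate_PH = as_mat1 (mmult1 Pgate1 Hgate1)"
definition gate_HP :: mat where "gate_HP = as_mat1 (mmult1 Hgate1 Pgate1)"

(* CNOT with control qubit 0 and target qubit 1 *)
definition gate_CNOT :: mat where
  "gate_CNOT = (\<lambda>x y. if x = (if 0 \<in> y then sdiff y {1} else y) then 1 else 0)"

end

theory Submission
  imports Defs
begin

text \<open>
  A 1-local Clifford circuit conjugates \<open>X\<close> and \<open>Z\<close> on qubit \<open>i\<close> to distinct Paulis
  \<open>P_{px i}\<close> and \<open>P_{pz i}\<close>. If the circuit is a logical operator it maps stabilizers to
  stabilizers, and it follows that \<open>A\<close> and \<open>B\<close> are both closed under intersection with the set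
  of aligned qubits, those where the image of \<open>X\<close> has an \<open>X\<close>-component and the image of \<open>Z\<close> a
  \<open>Z\<close>-component. For a non-splitting code, therefore, either no qubit or every qubit is aligned.
  A partially addressing circuit leaves some logical qubit untouched and so commutes with its
  logical \<open>X\<close> and \<open>Z\<close>; without aligned qubits this would put the logical \<open>X\<close> into \<open>B\<close> and the
  logical \<open>Z\<close> into \<open>A\<close>. With all qubits aligned, the circuit maps \<open>X\<close>-type operators to
  \<open>X\<close>-type and \<open>Z\<close>-type to \<open>Z\<close>-type ones up to stabilizers, so acting as \<open>H\<close> or \<open>PH\<close> (logical
  \<open>X\<close> to logical \<open>Z\<close>), as \<open>HP\<close> (logical \<open>Z\<close> to logical \<open>X\<close>) or as \<open>CNOT\<close> (logical \<open>X\<^sub>c\<close> to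
  \<open>X\<^sub>c X\<^sub>t\<close>) on a tuple would put a logical \<open>X\<close> into \<open>A\<close> or a logical \<open>Z\<close> into \<open>B\<close>.
\<close>

lemma sdiff_iff [simp]: "i \<in> sdiff a b \<longleftrightarrow> (i \<in> a) \<noteq> (i \<in> b)"
  by (auto simp: sdiff_def)

lemma sdiff_commute: "sdiff a b = sdiff b a"
  by auto

lemma sdiff_self [simp]: "sdiff a a = {}"
  and sdiff_empty [simp]: "sdiff a {} = a" "sdiff {} a = a"
  and sdiff_cancel [simp]: "sdiff a (sdiff a b) = b" "sdiff (sdiff b a) a = b"
  and sdiff_eq_empty_iff [simp]: "sdiff a b = {} \<longleftrightarrow> a = b"
  by auto

lemma sdiff_subsetI: "a \<subseteq> S \<Longrightarrow> b \<subseteq> S \<Longrightarrow> sdiff a b \<subseteq> S"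
  by auto

lemma finite_sdiff [simp]: "finite a \<Longrightarrow> finite b \<Longrightarrow> finite (sdiff a b)"
  by (simp add: sdiff_def)

lemma inj_on_sdiff: "inj_on (sdiff a) X"
  by (rule inj_onI) (metis sdiff_cancel(1))

lemma even_card_sdiff:
  assumes "finite P" "finite Q"
  shows "even (card (sdiff P Q)) \<longleftrightarrow> (even (card P) \<longleftrightarrow> even (card Q))"
proof -
  have "card (sdiff P Q) + 2 * card (P \<inter> Q) = card P + card Q"
  proof -
    have "card (sdiff P Q) = card (P - Q) + card (Q - P)"
      using assms unfolding sdiff_def by (intro card_Un_disjoint) auto
    moreover have "card (P - Q) + card (P \<inter> Q) = card P" "card (Q - P) + card (P \<inter> Q) = card Q"
      using assms by (metis card_Diff_subset_Int card_mono finite_Int inf_le1 inf_commute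
          le_add_diff_inverse2)+
    ultimately show ?thesis by linarith
  qed
  then show ?thesis
    by (metis even_add even_mult_iff even_numeral)
qed

lemma even_card_sdiff_Int:
  assumes "finite P" "finite Q"
  shows "even (card (r \<inter> sdiff P Q)) \<longleftrightarrow> (even (card (r \<inter> P)) \<longleftrightarrow> even (card (r \<inter> Q)))"
proof -
  have "r \<inter> sdiff P Q = sdiff (r \<inter> P) (r \<inter> Q)"
    by auto
  then show ?thesis
    using assms by (simp add: even_card_sdiff)
qed

lemma minus_one_power_card_sdiff_Int:
  assumes "finite P" "finite Q"
  shows "(-1::'a::ring_1) ^ card (sdiff P Q \<inter> r) = (-1) ^ card (P \<inter> r) * (-1) ^ card (Q \<inter> r)"
  using even_card_sdiff_Int[OF assms, of r]
  by (cases "even (card (P \<inter> r))"; cases "even (card (Q \<inter> r))") (simp_all add: inf_commute)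

section \<open>Subspaces of \<open>F\<^sub>2\<^sup>n\<close>\<close>

lemma f2_subspace_subset: "f2_subspace n X \<Longrightarrow> x \<in> X \<Longrightarrow> x \<subseteq> {0..<n}"
  and f2_subspace_empty: "f2_subspace n X \<Longrightarrow> {} \<in> X"
  and f2_subspace_sdiff: "f2_subspace n X \<Longrightarrow> x \<in> X \<Longrightarrow> y \<in> X \<Longrightarrow> sdiff x y \<in> X"
  by (auto simp: f2_subspace_def)

lemma f2_subspace_finite_elem: "f2_subspace n X \<Longrightarrow> x \<in> X \<Longrightarrow> finite x"
  by (meson f2_subspace_subset finite_atLeastLessThan finite_subset)

lemma finite_f2_subspace: "f2_subspace n X \<Longrightarrow> finite X"
  unfolding f2_subspace_def by (meson finite_Pow_iff finite_atLeastLessThan finite_subset)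

lemma card_f2_subspace_halve:
  assumes X: "f2_subspace n X" and x1: "x1 \<in> X" "i \<in> x1"
  shows "card X = 2 * card {x\<in>X. i \<notin> x}"
proof -
  let ?X0 = "{x\<in>X. i \<notin> x}"
  have "{x\<in>X. i \<in> x} = sdiff x1 ` ?X0"
  proof (intro equalityI subsetI)
    fix x
    assume "x \<in> {x\<in>X. i \<in> x}"
    then have "sdiff x1 x \<in> ?X0"
      using x1 f2_subspace_sdiff[OF X] by auto
    then show "x \<in> sdiff x1 ` ?X0"
      by (metis image_eqI sdiff_cancel(1))
  qed (use x1 f2_subspace_sdiff[OF X] in auto)
  moreover have "X = ?X0 \<union> {x\<in>X. i \<in> x}" "?X0 \<inter> {x\<in>X. i \<in> x} = {}"
    by auto
  ultimately have "card X = card ?X0 + card (sdiff x1 ` ?X0)"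
    using finite_f2_subspace[OF X] by (metis (no_types, lifting) card_Un_disjoint finite_Un)
  then show ?thesis
    using inj_on_sdiff by (simp add: card_image)
qed

lemma card_f2_subspace_power: "f2_subspace n X \<Longrightarrow> \<exists>d. card X = 2 ^ d"
proof (induction n arbitrary: X)
  case 0
  then have "X = {{}}"
    using f2_subspace_empty by (fastforce simp: f2_subspace_def)
  then show ?case
    by (intro exI[of _ 0]) simp
next
  case (Suc n)
  have "f2_subspace n {x\<in>X. n \<notin> x}"
    using Suc.prems unfolding f2_subspace_def by (auto simp: less_Suc_eq subset_iff)
  then obtain d where d: "card {x\<in>X. n \<notin> x} = 2 ^ d"
    using Suc.IH by blast
  show ?case
  proof (cases "\<exists>x1\<in>X. n \<in> x1")
    case True
    then show ?thesis
      using card_f2_subspace_halve[OF Suc.prems] d by (metis power_Suc)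
  next
    case False
    then have "X = {x\<in>X. n \<notin> x}"
      by auto
    then show ?thesis
      using d by metis
  qed
qed

lemma card_eq_power_dimF2: "f2_subspace n X \<Longrightarrow> card X = 2 ^ dimF2 X"
proof -
  assume "f2_subspace n X"
  then obtain d where d: "card X = 2 ^ d"
    using card_f2_subspace_power by blast
  then have "dimF2 X = d"
    unfolding dimF2_def by (rule the_equality) (use d in auto)
  then show ?thesis
    using d by simp
qed

definition perp :: "nat \<Rightarrow> nat set set \<Rightarrow> nat set set" where
  "perp n X = {y. y \<subseteq> {0..<n} \<and> (\<forall>x\<in>X. even (card (x \<inter> y)))}"

lemma f2_subspace_perp: "f2_subspace n (perp n X)"
  unfolding f2_subspace_def
proof (intro conjI ballI)
  fix a b
  assume "a \<in> perp n X" "b \<in> perp n X"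
  moreover then have "finite a" "finite b"
    by (auto simp: perp_def dest: finite_subset)
  ultimately show "sdiff a b \<in> perp n X"
    unfolding perp_def by (simp add: sdiff_subsetI even_card_sdiff_Int)
qed (auto simp: perp_def)

lemma sum_Pow_prod:
  fixes F :: "nat \<Rightarrow> bool \<Rightarrow> 'a::comm_semiring_1"
  shows "(\<Sum>y\<in>Pow {0..<n}. \<Prod>i<n. F i (i \<in> y)) = (\<Prod>i<n. F i False + F i True)"
proof (induction n)
  case 0
  then show ?case by simp
next
  case (Suc n)
  have Pow_Suc: "Pow {0..<Suc n} = Pow {0..<n} \<union> insert n ` Pow {0..<n}"
    by (simp add: atLeast0_lessThan_Suc Pow_insert)
  have n: "n \<notin> y" if "y \<in> Pow {0..<n}" for y
    using that by auto
  have inj: "inj_on (insert n) (Pow {0..<n})"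
    by (rule inj_onI) (metis PowD atLeastLessThan_iff insert_ident less_irrefl subset_iff)
  have "(\<Sum>y\<in>Pow {0..<Suc n}. \<Prod>i<Suc n. F i (i \<in> y)) =
      (\<Sum>y\<in>Pow {0..<n}. \<Prod>i<Suc n. F i (i \<in> y)) +
      (\<Sum>y\<in>insert n ` Pow {0..<n}. \<Prod>i<Suc n. F i (i \<in> y))"
    unfolding Pow_Suc by (rule sum.union_disjoint) auto
  also have "(\<Sum>y\<in>Pow {0..<n}. \<Prod>i<Suc n. F i (i \<in> y)) =
      (\<Sum>y\<in>Pow {0..<n}. \<Prod>i<n. F i (i \<in> y)) * F n False"
    unfolding sum_distrib_right by (intro sum.cong) (auto simp: prod.lessThan_Suc n)
  also have "(\<Sum>y\<in>insert n ` Pow {0..<n}. \<Prod>i<Suc n. F i (i \<in> y)) =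
      (\<Sum>y\<in>Pow {0..<n}. \<Prod>i<n. F i (i \<in> y)) * F n True"
    unfolding sum.reindex[OF inj] sum_distrib_right by (intro sum.cong) (auto simp: prod.lessThan_Suc)
  also have "(\<Sum>y\<in>Pow {0..<n}. \<Prod>i<n. F i (i \<in> y)) * F n False +
      (\<Sum>y\<in>Pow {0..<n}. \<Prod>i<n. F i (i \<in> y)) * F n True = (\<Prod>i<Suc n. F i False + F i True)"
    by (simp only: Suc.IH prod.lessThan_Suc distrib_left)
  finally show ?case .
qed

lemma sum_Pow_minus_one_power_card:
  assumes "x \<subseteq> {0..<n}"
  shows "(\<Sum>y\<in>Pow {0..<n}. (-1::int) ^ card (x \<inter> y)) = (if x = {} then 2 ^ n else 0)"
proof -
  have as_prod: "(-1::int) ^ card (x \<inter> y) = (\<Prod>i<n. if i \<in> x \<and> i \<in> y then -1 else 1)"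
    if "y \<in> Pow {0..<n}" for y
  proof -
    have "{i\<in>{..<n}. i \<in> x \<and> i \<in> y} = x \<inter> y"
      using that by auto
    then show ?thesis
      by (simp add: prod.inter_filter[symmetric])
  qed
  have "(\<Sum>y\<in>Pow {0..<n}. (-1::int) ^ card (x \<inter> y)) =
      (\<Sum>y\<in>Pow {0..<n}. \<Prod>i<n. if i \<in> x \<and> i \<in> y then -1 else 1)"
    by (rule sum.cong) (simp_all add: as_prod)
  also have "\<dots> = (\<Prod>i<n. if i \<in> x then 0 else 2)"
    unfolding sum_Pow_prod[where F = "\<lambda>i b. if i \<in> x \<and> b then -1 else 1"] by (rule prod.cong) auto
  also have "\<dots> = (if x = {} then 2 ^ n else 0)"
  proof (cases "x = {}")
    case False
    then obtain i where "i \<in> x"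
      by blast
    with assms show ?thesis
      by (intro prod_zero[THEN trans]) force+
  qed simp
  finally show ?thesis .
qed

lemma sum_f2_subspace_minus_one_power_card:
  assumes X: "f2_subspace n X"
  shows "(\<Sum>x\<in>X. (-1::int) ^ card (x \<inter> y)) = (if \<forall>x\<in>X. even (card (x \<inter> y)) then int (card X) else 0)"
proof (cases "\<forall>x\<in>X. even (card (x \<inter> y))")
  case False
  then obtain x0 where x0: "x0 \<in> X" "odd (card (x0 \<inter> y))"
    by blast
  \<comment> \<open>translation by \<open>x0\<close> is a bijection of \<open>X\<close> flipping every sign\<close>
  have "(\<Sum>x\<in>X. (-1::int) ^ card (x \<inter> y)) = (\<Sum>x\<in>X. (-1::int) ^ card (sdiff x x0 \<inter> y))"
    by (rule sum.reindex_bij_witness[where i="\<lambda>x. sdiff x x0" and j="\<lambda>x. sdiff x x0"])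
      (auto intro: f2_subspace_sdiff[OF X] x0)
  also have "\<dots> = - (\<Sum>x\<in>X. (-1::int) ^ card (x \<inter> y))"
    unfolding sum_negf[symmetric] using x0 f2_subspace_finite_elem[OF X]
    by (intro sum.cong) (auto simp: minus_one_power_card_sdiff_Int)
  finally show ?thesis
    unfolding if_not_P[OF False] by simp
qed simp

lemma card_mult_card_perp:
  assumes X: "f2_subspace n X"
  shows "card X * card (perp n X) = 2 ^ n"
proof -
  let ?f = "\<lambda>x y. (-1::int) ^ card (x \<inter> y)"
  \<comment> \<open>double counting of the character sum\<close>
  have "(\<Sum>y\<in>Pow {0..<n}. \<Sum>x\<in>X. ?f x y) = (\<Sum>x\<in>X. \<Sum>y\<in>Pow {0..<n}. ?f x y)"
    by (rule sum.swap)
  also have "\<dots> = (\<Sum>x\<in>X. if x = {} then 2 ^ n else 0)"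
    by (rule sum.cong) (auto simp: sum_Pow_minus_one_power_card f2_subspace_subset[OF X])
  also have "\<dots> = 2 ^ n"
    using f2_subspace_empty[OF X] finite_f2_subspace[OF X] by simp
  finally have "(\<Sum>y\<in>Pow {0..<n}. \<Sum>x\<in>X. ?f x y) = 2 ^ n" .
  moreover have "(\<Sum>y\<in>Pow {0..<n}. \<Sum>x\<in>X. ?f x y) = (\<Sum>y\<in>perp n X. int (card X))"
  proof -
    have "(\<Sum>y\<in>Pow {0..<n}. \<Sum>x\<in>X. ?f x y) = (\<Sum>y\<in>Pow {0..<n}. if y \<in> perp n X then int (card X) else 0)"
      by (rule sum.cong) (auto simp: sum_f2_subspace_minus_one_power_card[OF X] perp_def)
    also have "\<dots> = (\<Sum>y\<in>Pow {0..<n} \<inter> perp n X. int (card X))"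
      by (rule sum.inter_restrict[symmetric]) simp
    also have "Pow {0..<n} \<inter> perp n X = perp n X"
      by (auto simp: perp_def)
    finally show ?thesis .
  qed
  ultimately have "int (card X * card (perp n X)) = int (2 ^ n)"
    by (simp add: mult.commute)
  then show ?thesis
    by (simp only: of_nat_eq_iff)
qed

lemma f2_subspace_adjoin:
  assumes B: "f2_subspace n B" and \<beta>: "\<beta> \<subseteq> {0..<n}"
  shows "f2_subspace n (B \<union> sdiff \<beta> ` B)"
  unfolding f2_subspace_def
proof (intro conjI ballI)
  show "B \<union> sdiff \<beta> ` B \<subseteq> Pow {0..<n}"
    using f2_subspace_subset[OF B] \<beta> sdiff_subsetI by blast
  show "{} \<in> B \<union> sdiff \<beta> ` B"
    using f2_subspace_empty[OF B] by auto
  have "sdiff a b \<in> B" "sdiff (sdiff \<beta> a) b = sdiff \<beta> (sdiff a b)" "sdiff a (sdiff \<beta> b) = sdiff \<beta> (sdiff a b)"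
    "sdiff (sdiff \<beta> a) (sdiff \<beta> b) = sdiff a b" if "a \<in> B" "b \<in> B" for a b
    using f2_subspace_sdiff[OF B that] by auto
  then show "sdiff a b \<in> B \<union> sdiff \<beta> ` B" if "a \<in> B \<union> sdiff \<beta> ` B" "b \<in> B \<union> sdiff \<beta> ` B" for a b
    using that by (elim UnE imageE) simp_all
qed

lemma perp_adjoin:
  assumes B: "f2_subspace n B" and \<beta>: "\<beta> \<in> perp n (perp n B)"
  shows "perp n (B \<union> sdiff \<beta> ` B) = perp n B"
proof
  show "perp n (B \<union> sdiff \<beta> ` B) \<subseteq> perp n B"
    unfolding perp_def by auto
  show "perp n B \<subseteq> perp n (B \<union> sdiff \<beta> ` B)"
  proof
    fix y
    assume y: "y \<in> perp n B"
    have "finite \<beta>"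
      using \<beta> finite_subset[OF _ finite_atLeastLessThan] by (auto simp: perp_def)
    then have "even (card (y \<inter> sdiff \<beta> b))" if "b \<in> B" for b
      using \<beta> y that even_card_sdiff_Int[OF _ f2_subspace_finite_elem[OF B that], of \<beta> y]
      by (auto simp: perp_def inf_commute)
    then show "y \<in> perp n (B \<union> sdiff \<beta> ` B)"
      using y unfolding perp_def by (auto simp: inf_commute)
  qed
qed

lemma perp_perp:
  assumes B: "f2_subspace n B"
  shows "perp n (perp n B) = B"
proof
  show "B \<subseteq> perp n (perp n B)"
    using f2_subspace_subset[OF B] by (auto simp: perp_def inf_commute)
  show "perp n (perp n B) \<subseteq> B"
  proof
    fix \<beta>
    assume \<beta>: "\<beta> \<in> perp n (perp n B)"
    show "\<beta> \<in> B"
    proof (rule ccontr)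
      assume "\<beta> \<notin> B"
      \<comment> \<open>then adjoining \<open>\<beta>\<close> would double \<open>B\<close> without changing its orthogonal complement\<close>
      then have "B \<inter> sdiff \<beta> ` B = {}"
        using f2_subspace_sdiff[OF B] by (force simp: sdiff_commute)
      then have "card (B \<union> sdiff \<beta> ` B) = 2 * card B"
        using finite_f2_subspace[OF B] inj_on_sdiff by (simp add: card_Un_disjoint card_image)
      moreover have "f2_subspace n (B \<union> sdiff \<beta> ` B)"
        using \<beta> by (intro f2_subspace_adjoin[OF B]) (simp add: perp_def)
      ultimately have "2 * 2 ^ n = (2::nat) ^ n"
        using card_mult_card_perp card_mult_card_perp[OF B] perp_adjoin[OF B \<beta>] by (metis mult.assoc)
      then show False
        by simp
    qed
  qed
qed

lemma f2_subspace_image: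
  assumes X: "f2_subspace n X"
    and hom: "\<And>a b. f (sdiff a b) = sdiff (f a) (f b)" and sub: "\<And>a. a \<subseteq> {0..<n} \<Longrightarrow> f a \<subseteq> {0..<n}"
  shows "f2_subspace n (f ` X)"
  unfolding f2_subspace_def
proof (intro conjI ballI)
  show "f ` X \<subseteq> Pow {0..<n}"
    using sub f2_subspace_subset[OF X] by auto
  have "f {} = {}"
    using hom[of "{}" "{}"] by simp
  then show "{} \<in> f ` X"
    using f2_subspace_empty[OF X] by force
  fix a b
  assume "a \<in> f ` X" "b \<in> f ` X"
  then obtain a' b' where "a' \<in> X" "b' \<in> X" "sdiff a b = f (sdiff a' b')"
    by (auto simp: hom)
  then show "sdiff a b \<in> f ` X"
    using f2_subspace_sdiff[OF X] by simp
qed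

lemma subspace_splits_if_Int_closed:
  assumes X: "f2_subspace n X" and h: "\<And>a. a \<in> X \<Longrightarrow> a \<inter> h \<in> X"
  shows "subspace_splits n X h"
  unfolding subspace_splits_def
proof (intro exI conjI)
  have diff_h: "a - h \<in> X" if "a \<in> X" for a
  proof -
    have "a - h = sdiff a (a \<inter> h)"
      by auto
    then show ?thesis
      using f2_subspace_sdiff[OF X that h[OF that]] by simp
  qed
  show "f2_subspace n ((\<lambda>a. a \<inter> h) ` X)"
    by (rule f2_subspace_image[OF X]) auto
  show "f2_subspace n ((\<lambda>a. a - h) ` X)"
    by (rule f2_subspace_image[OF X]) auto
  show "\<forall>a\<in>(\<lambda>a. a - h) ` X. a \<subseteq> {0..<n} - h"
    using f2_subspace_subset[OF X] by auto
  show "X = {sdiff a1 a2 |a1 a2. a1 \<in> (\<lambda>a. a \<inter> h) ` X \<and> a2 \<in> (\<lambda>a. a - h) ` X}"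
  proof (intro equalityI subsetI)
    fix a
    assume "a \<in> X"
    moreover have "a = sdiff (a \<inter> h) (a - h)"
      by auto
    ultimately show "a \<in> {sdiff a1 a2 |a1 a2. a1 \<in> (\<lambda>a. a \<inter> h) ` X \<and> a2 \<in> (\<lambda>a. a - h) ` X}"
      by blast
  next
    fix z
    assume "z \<in> {sdiff a1 a2 |a1 a2. a1 \<in> (\<lambda>a. a \<inter> h) ` X \<and> a2 \<in> (\<lambda>a. a - h) ` X}"
    then obtain a b where "a \<in> X" "b \<in> X" "z = sdiff (a \<inter> h) (b - h)"
      by blast
    then show "z \<in> X"
      using f2_subspace_sdiff[OF X h diff_h] by simp
  qed
qed auto

section \<open>Single-qubit gates\<close>

lemma mmult1_expand: "mmult1 f g a b = f a False * g False b + f a True * g True b"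
  by (simp add: mmult1_def UNIV_bool add.commute)

lemma mmult1_assoc: "mmult1 (mmult1 f g) h = mmult1 f (mmult1 g h)"
  by (auto simp: fun_eq_iff mmult1_expand algebra_simps)

lemma mmult1_id_left [simp]: "mmult1 (pauli1 0) g = g"
  and mmult1_id_right [simp]: "mmult1 g (pauli1 0) = g"
  by (auto simp: fun_eq_iff mmult1_expand pauli1_def)

lemma mmult1_scale_left: "mmult1 (\<lambda>a b. c * f a b) g = (\<lambda>a b. c * mmult1 f g a b)"
  and mmult1_scale_right: "mmult1 f (\<lambda>a b. c * g a b) = (\<lambda>a b. c * mmult1 f g a b)"
  by (auto simp: fun_eq_iff mmult1_expand algebra_simps)

lemma adj1_mmult: "adj1 (mmult1 f h) = mmult1 (adj1 h) (adj1 f)"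
  by (auto simp: fun_eq_iff adj1_def mmult1_expand mult.commute)

lemma adj1_id [simp]: "adj1 (pauli1 0) = pauli1 0"
  by (auto simp: fun_eq_iff adj1_def pauli1_def)

lemma unitary1_adj_mult:
  assumes "unitary1 g"
  shows "mmult1 (adj1 g) g = pauli1 0"
proof -
  have h: "mmult1 g (adj1 g) a b = pauli1 0 a b" for a b
    using assms unfolding unitary1_def by simp
  define g00 g01 g10 g11 where "g00 = g False False" "g01 = g False True"
    "g10 = g True False" "g11 = g True True"
  have "g00 * cnj g00 + g01 * cnj g01 = 1" "g00 * cnj g10 + g01 * cnj g11 = 0"
    "g10 * cnj g00 + g11 * cnj g01 = 0" "g10 * cnj g10 + g11 * cnj g11 = 1"
    using h[of False False] h[of False True] h[of True False] h[of True True]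
    by (simp_all add: mmult1_expand adj1_def pauli1_def g00_g01_g10_g11_def)
  \<comment> \<open>a one-sided inverse of a 2x2 matrix is two-sided\<close>
  then have "cnj g00 * g00 + cnj g10 * g10 = 1" "cnj g00 * g01 + cnj g10 * g11 = 0"
    "cnj g01 * g00 + cnj g11 * g10 = 0" "cnj g01 * g01 + cnj g11 * g11 = 1"
    by algebra+
  then show ?thesis
    unfolding fun_eq_iff
    by (simp add: mmult1_expand adj1_def pauli1_def g00_g01_g10_g11_def all_bool_eq)
qed

definition conj1 :: "gate1 \<Rightarrow> gate1 \<Rightarrow> gate1" where
  "conj1 g M = mmult1 (mmult1 g M) (adj1 g)"

lemma mmult1_conj1:
  assumes "unitary1 g"
  shows "mmult1 (conj1 g M) g = mmult1 g M"
  using unitary1_adj_mult[OF assms] by (simp add: conj1_def mmult1_assoc)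

lemma conj1_cancel:
  assumes "unitary1 g"
  shows "mmult1 (mmult1 (adj1 g) (conj1 g M)) g = M"
proof -
  have "mmult1 (mmult1 (adj1 g) (conj1 g M)) g = mmult1 (adj1 g) (mmult1 g M)"
    by (simp add: mmult1_assoc mmult1_conj1[OF assms])
  also have "\<dots> = M"
    by (simp add: mmult1_assoc[symmetric] unitary1_adj_mult[OF assms])
  finally show ?thesis .
qed

lemma inj_conj1: "unitary1 g \<Longrightarrow> inj (conj1 g)"
  by (metis conj1_cancel injI)

lemma pauli1_in_group: "j < 4 \<Longrightarrow> pauli1 j \<in> pauli_group1"
  unfolding pauli_group1_def by (rule CollectI, rule exI[of _ 1], rule exI[of _ j]) auto

lemma finite_pauli_group1: "finite pauli_group1"
proof -
  have "pauli_group1 \<subseteq> (\<lambda>(c, j). (\<lambda>a b. c * pauli1 j a b)) ` ({1, -1, \<i>, - \<i>} \<times> {..<4})"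
    unfolding pauli_group1_def by auto
  then show ?thesis
    by (rule finite_subset) auto
qed

lemma clifford1_conj_pauli:
  assumes "clifford1 g" "P \<in> {1, 3}"
  obtains c p where "c \<noteq> 0" "p \<in> {1, 2, 3}" "conj1 g (pauli1 P) = (\<lambda>a b. c * pauli1 p a b)"
proof -
  have u: "unitary1 g"
    using assms(1) by (simp add: clifford1_def)
  have "conj1 g (pauli1 P) \<in> pauli_group1"
    using assms pauli1_in_group[of P] by (auto simp: clifford1_def conj1_def)
  then obtain c j where cj: "c \<in> {1, -1, \<i>, - \<i>}" "j < 4" "conj1 g (pauli1 P) = (\<lambda>a b. c * pauli1 j a b)"
    unfolding pauli_group1_def by blast
  \<comment> \<open>\<open>j = 0\<close> would make the non-scalar \<open>pauli1 P\<close> a multiple of the identity\<close>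
  have "j \<noteq> 0"
  proof
    assume "j = 0"
    then have "pauli1 P = (\<lambda>a b. c * pauli1 0 a b)"
      using conj1_cancel[OF u, of "pauli1 P"] cj(3)
      by (simp add: mmult1_scale_left mmult1_scale_right unitary1_adj_mult[OF u])
    then have "pauli1 P False True = c * pauli1 0 False True" "pauli1 P False False = c * pauli1 0 False False"
      "pauli1 P True True = c * pauli1 0 True True"
      by metis+
    then show False
      using assms(2) cj(1) by (auto simp: pauli1_def)
  qed
  then show ?thesis
    using cj by (intro that[of c j]) auto
qed

lemma conj1_pauli_X_Z_distinct:
  assumes u: "unitary1 g"
    and X: "conj1 g (pauli1 1) = (\<lambda>a b. c * pauli1 p a b)"
    and Z: "conj1 g (pauli1 3) = (\<lambda>a b. c' * pauli1 p' a b)"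
    and "c' \<noteq> 0"
  shows "p \<noteq> p'"
proof
  assume "p = p'"
  define M where "M = mmult1 (mmult1 (adj1 g) (pauli1 p)) g"
  have "pauli1 1 = (\<lambda>a b. c * M a b)" "pauli1 3 = (\<lambda>a b. c' * M a b)"
    using conj1_cancel[OF u, of "pauli1 1"] conj1_cancel[OF u, of "pauli1 3"] X Z \<open>p = p'\<close>
    by (simp_all add: M_def mmult1_scale_left mmult1_scale_right)
  then have "pauli1 1 False True = c * M False True" "pauli1 3 False True = c' * M False True"
    "pauli1 3 False False = c' * M False False" "pauli1 1 False False = c * M False False"
    by metis+
  then show False
    using \<open>c' \<noteq> 0\<close> by (auto simp: pauli1_def)
qed

primrec gate_pow :: "gate1 \<Rightarrow> nat \<Rightarrow> gate1" where
  "gate_pow g 0 = pauli1 0"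
| "gate_pow g (Suc m) = mmult1 g (gate_pow g m)"

lemma gate_pow_add: "gate_pow g (a + b) = mmult1 (gate_pow g a) (gate_pow g b)"
  by (induction a) (simp_all add: mmult1_assoc)

lemma gate_pow_mult: "gate_pow g (a * b) = gate_pow (gate_pow g a) b"
  by (induction b) (simp_all add: gate_pow_add)

lemma gate_pow_scalar: "gate_pow (\<lambda>a b. l * pauli1 0 a b) r = (\<lambda>a b. l ^ r * pauli1 0 a b)"
  by (induction r) (simp_all add: mmult1_scale_left mult.assoc)

lemma gate_pow_multiple_scalar:
  assumes "gate_pow g N = (\<lambda>a b. l * pauli1 0 a b)" "N dvd M"
  shows "gate_pow g M = (\<lambda>a b. l ^ (M div N) * pauli1 0 a b)"
proof -
  have "gate_pow g M = gate_pow (gate_pow g N) (M div N)"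
    using assms(2) by (metis dvd_mult_div_cancel gate_pow_mult)
  then show ?thesis
    using assms(1) by (simp add: gate_pow_scalar)
qed

lemma adj_gate_pow_mult:
  assumes "unitary1 g"
  shows "mmult1 (adj1 (gate_pow g m)) (gate_pow g m) = pauli1 0"
proof (induction m)
  case (Suc m)
  have "mmult1 (adj1 (gate_pow g (Suc m))) (gate_pow g (Suc m)) =
      mmult1 (adj1 (gate_pow g m)) (mmult1 (mmult1 (adj1 g) g) (gate_pow g m))"
    by (simp add: adj1_mmult mmult1_assoc)
  then show ?case
    using unitary1_adj_mult[OF assms] Suc by simp
qed simp

lemma funpow_conj1: "(conj1 g ^^ m) P = conj1 (gate_pow g m) P"
  by (induction m) (simp_all add: conj1_def adj1_mmult mmult1_assoc)

lemma scalar_if_commutes_pauli: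
  assumes X: "mmult1 M (pauli1 1) = mmult1 (pauli1 1) M"
    and Z: "mmult1 M (pauli1 3) = mmult1 (pauli1 3) M"
  shows "M = (\<lambda>a b. M False False * pauli1 0 a b)"
proof -
  have "M False True = 0" "M True False = 0" "M True True = M False False"
    using fun_cong[OF fun_cong[OF Z, of False], of True] fun_cong[OF fun_cong[OF Z, of True], of False]
      fun_cong[OF fun_cong[OF X, of False], of True]
    by (simp_all add: mmult1_expand pauli1_def)
  then show ?thesis
    unfolding fun_eq_iff by (simp add: pauli1_def all_bool_eq)
qed

text \<open>Conjugation by a Clifford gate permutes the finite Pauli group, so some power of the gate
  commutes with \<open>X\<close> and \<open>Z\<close> and is therefore a scalar.\<close>

lemma clifford1_power_scalar:
  assumes c: "clifford1 g"
  obtains N l where "N > 0" "l \<noteq> 0" "gate_pow g N = (\<lambda>a b. l * pauli1 0 a b)"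
proof -
  have u: "unitary1 g"
    using c by (simp add: clifford1_def)
  have orbit: "finite {y. \<exists>m. y = (conj1 g ^^ m) P}" if "P \<in> pauli_group1" for P
  proof (rule finite_subset[OF _ finite_pauli_group1])
    have "(conj1 g ^^ m) P \<in> pauli_group1" for m
      using that c by (induction m) (auto simp: clifford1_def conj1_def)
    then show "{y. \<exists>m. y = (conj1 g ^^ m) P} \<subseteq> pauli_group1"
      by blast
  qed
  have "pauli1 1 \<in> pauli_group1" "pauli1 3 \<in> pauli_group1"
    by (simp_all add: pauli1_in_group)
  then obtain NX NZ where NX: "NX > 0" "(conj1 g ^^ NX) (pauli1 1) = pauli1 1"
    and NZ: "NZ > 0" "(conj1 g ^^ NZ) (pauli1 3) = pauli1 3"
    by (metis funpow_inj_finite[OF inj_conj1[OF u] orbit])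
  define M where "M = gate_pow g (NX * NZ)"
  have "conj1 M (pauli1 1) = pauli1 1" "conj1 M (pauli1 3) = pauli1 3"
    using funpow_mod_eq[where m = "NX * NZ", OF NX(2)] funpow_mod_eq[where m = "NX * NZ", OF NZ(2)]
    by (simp_all add: M_def funpow_conj1[symmetric])
  moreover have MU: "mmult1 (adj1 M) M = pauli1 0"
    unfolding M_def by (rule adj_gate_pow_mult[OF u])
  ultimately have "mmult1 M (pauli1 1) = mmult1 (pauli1 1) M" "mmult1 M (pauli1 3) = mmult1 (pauli1 3) M"
    by (metis conj1_def mmult1_assoc mmult1_id_right)+
  then have Ms: "M = (\<lambda>a b. M False False * pauli1 0 a b)"
    by (rule scalar_if_commutes_pauli)
  moreover have "M False False \<noteq> 0"
  proof
    assume "M False False = 0"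
    then have "mmult1 (adj1 M) M False False = 0"
      using Ms by (simp add: mmult1_expand)
    then show False
      using MU by (simp add: pauli1_def)
  qed
  ultimately show ?thesis
    using that[of "NX * NZ"] NX(1) NZ(1) unfolding M_def by auto
qed

section \<open>Circuits of single-qubit gates\<close>

lemma circuit_in_states: "circuit n g \<psi> \<in> states n"
  by (auto simp: circuit_def states_def)

lemma circuit_cong: "(\<And>i. i < n \<Longrightarrow> g i = g' i) \<Longrightarrow> circuit n g = circuit n g'"
  unfolding circuit_def by (intro ext if_cong sum.cong prod.cong refl) auto

lemma circuit_mmult1:
  assumes "\<psi> \<in> states n"
  shows "circuit n f (circuit n g \<psi>) = circuit n (\<lambda>i. mmult1 (f i) (g i)) \<psi>"
proof
  fix x
  show "circuit n f (circuit n g \<psi>) x = circuit n (\<lambda>i. mmult1 (f i) (g i)) \<psi> x"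
  proof (cases "x \<subseteq> {0..<n}")
    case True
    let ?f = "\<lambda>y. \<Prod>i<n. f i (i \<in> x) (i \<in> y)" and ?g = "\<lambda>y z. \<Prod>i<n. g i (i \<in> y) (i \<in> z)"
    have "circuit n f (circuit n g \<psi>) x = (\<Sum>y\<in>Pow {0..<n}. \<Sum>z\<in>Pow {0..<n}. ?f y * (?g y z * \<psi> z))"
      using True by (simp add: circuit_def sum_distrib_left)
    also have "\<dots> = (\<Sum>z\<in>Pow {0..<n}. (\<Sum>y\<in>Pow {0..<n}. ?f y * ?g y z) * \<psi> z)"
      by (subst sum.swap) (simp only: sum_distrib_right mult.assoc)
    also have "\<dots> = (\<Sum>z\<in>Pow {0..<n}. (\<Prod>i<n. mmult1 (f i) (g i) (i \<in> x) (i \<in> z)) * \<psi> z)"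
      unfolding prod.distrib[symmetric]
      by (subst sum_Pow_prod[where F = "\<lambda>i b. f i (i \<in> x) b * g i b (i \<in> _)"]) (simp add: mmult1_expand)
    finally show ?thesis
      using True by (simp add: circuit_def)
  qed (simp add: circuit_def)
qed

lemma circuit_scale_gates:
  "circuit n (\<lambda>i a b. c i * h i a b) \<psi> = (\<lambda>x. (\<Prod>i<n. c i) * circuit n h \<psi> x)"
  by (auto simp: circuit_def fun_eq_iff prod.distrib sum_distrib_left mult_ac)

lemma circuit_scale: "circuit n g (\<lambda>x. c * \<phi> x) = (\<lambda>x. c * circuit n g \<phi> x)"
  by (auto simp: circuit_def fun_eq_iff sum_distrib_left mult_ac)

lemma circuit_sum:
  "circuit n g (\<lambda>x. \<Sum>m\<in>M. c m * \<phi> m x) = (\<lambda>x. \<Sum>m\<in>M. c m * circuit n g (\<phi> m) x)"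
  unfolding circuit_def fun_eq_iff
  by (simp add: sum_distrib_left mult.left_commute sum.swap[of _ "Pow {0..<n}"])

definition pauli_gates :: "nat \<Rightarrow> nat set \<Rightarrow> nat \<Rightarrow> gate1" where
  "pauli_gates P a i = (if i \<in> a then pauli1 P else pauli1 0)"

lemma circuit_pauli_gates_entry:
  assumes "x \<subseteq> {0..<n}" "y \<subseteq> {0..<n}" "a \<subseteq> {0..<n}"
  shows "(\<Prod>i<n. pauli_gates 1 a i (i \<in> x) (i \<in> y)) = (if y = sdiff x a then 1 else 0)"
    and "(\<Prod>i<n. pauli_gates 3 a i (i \<in> x) (i \<in> y)) = (if y = x then (-1) ^ card (x \<inter> a) else 0)"
proof -
  have "y = z \<longleftrightarrow> (\<forall>i<n. (i \<in> y) = (i \<in> z))" if "z \<subseteq> {0..<n}" for z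
    using assms(2) that by auto
  then have eq: "y = sdiff x a \<longleftrightarrow> (\<forall>i<n. (i \<in> y) = (i \<in> sdiff x a))" "y = x \<longleftrightarrow> (\<forall>i<n. (i \<in> y) = (i \<in> x))"
    using assms by (simp_all add: sdiff_subsetI)
  have "(\<Prod>i<n. pauli_gates 1 a i (i \<in> x) (i \<in> y)) = (\<Prod>i<n. if (i \<in> y) = (i \<in> sdiff x a) then 1 else 0)"
    by (rule prod.cong) (auto simp: pauli_gates_def pauli1_def)
  also have "\<dots> = (if y = sdiff x a then 1 else 0)"
    unfolding eq by (auto simp: prod_zero_iff)
  finally show "(\<Prod>i<n. pauli_gates 1 a i (i \<in> x) (i \<in> y)) = (if y = sdiff x a then 1 else 0)" .
  have "{i\<in>{..<n}. i \<in> a \<and> i \<in> x} = x \<inter> a"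
    using assms(1) by auto
  then have "(\<Prod>i<n. if i \<in> a \<and> i \<in> x then -1 else 1) = ((-1::complex) ^ card (x \<inter> a))"
    by (simp add: prod.inter_filter[symmetric])
  moreover have "(\<Prod>i<n. pauli_gates 3 a i (i \<in> x) (i \<in> y)) =
      (\<Prod>i<n. (if i \<in> a \<and> i \<in> x then -1 else 1) * (if (i \<in> y) = (i \<in> x) then 1 else 0))"
    by (rule prod.cong) (auto simp: pauli_gates_def pauli1_def)
  ultimately show "(\<Prod>i<n. pauli_gates 3 a i (i \<in> x) (i \<in> y)) = (if y = x then (-1) ^ card (x \<inter> a) else 0)"
    unfolding prod.distrib eq by (auto simp: prod_zero_iff)
qed

lemma Xop_eq_circuit:
  assumes "\<psi> \<in> states n" "a \<subseteq> {0..<n}"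
  shows "Xop a \<psi> = circuit n (pauli_gates 1 a) \<psi>"
proof
  fix x
  show "Xop a \<psi> x = circuit n (pauli_gates 1 a) \<psi> x"
  proof (cases "x \<subseteq> {0..<n}")
    case True
    then have "sdiff x a \<in> Pow {0..<n}"
      using assms(2) by (simp add: sdiff_subsetI)
    moreover have "circuit n (pauli_gates 1 a) \<psi> x = (\<Sum>y\<in>Pow {0..<n}. if y = sdiff x a then \<psi> y else 0)"
      unfolding circuit_def if_P[OF True]
      by (rule sum.cong) (simp_all only: Pow_iff circuit_pauli_gates_entry(1)[OF True _ assms(2)] if_distrib,
          simp)
    ultimately show ?thesis
      by (simp add: Xop_def)
  next
    case False
    then obtain i where "i \<in> x" "i \<notin> {0..<n}"
      by blast
    then have "\<not> sdiff x a \<subseteq> {0..<n}"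
      using assms(2) by (metis sdiff_iff subsetD)
    then show ?thesis
      using False assms(1) by (simp add: Xop_def circuit_def states_def)
  qed
qed

lemma Zop_eq_circuit:
  assumes "\<psi> \<in> states n" "b \<subseteq> {0..<n}"
  shows "Zop b \<psi> = circuit n (pauli_gates 3 b) \<psi>"
proof
  fix x
  show "Zop b \<psi> x = circuit n (pauli_gates 3 b) \<psi> x"
  proof (cases "x \<subseteq> {0..<n}")
    case True
    have "circuit n (pauli_gates 3 b) \<psi> x = (\<Sum>y\<in>Pow {0..<n}. if y = x then (-1) ^ card (x \<inter> b) * \<psi> y else 0)"
      unfolding circuit_def if_P[OF True]
      by (rule sum.cong) (simp_all only: Pow_iff circuit_pauli_gates_entry(2)[OF True _ assms(2)] if_distrib,
          simp)
    then show ?thesis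
      using True by (simp add: Zop_def)
  qed (use assms(1) in \<open>simp add: Zop_def circuit_def states_def\<close>)
qed

text \<open>With the Paulis indexed \<open>1, 2, 3\<close> for \<open>X, Y, Z\<close>, the Pauli string with \<open>P_{p i}\<close> on the qubits
  of \<open>a\<close> is \<open>X\<^bsup>x_support p a\<^esup> Z\<^bsup>z_support p a\<^esup>\<close> up to a phase.\<close>

definition x_support :: "(nat \<Rightarrow> nat) \<Rightarrow> nat set \<Rightarrow> nat set" where
  "x_support p a = {i \<in> a. p i = 1 \<or> p i = 2}"

definition z_support :: "(nat \<Rightarrow> nat) \<Rightarrow> nat set \<Rightarrow> nat set" where
  "z_support p a = {i \<in> a. p i = 2 \<or> p i = 3}"

lemma x_support_subset: "x_support p a \<subseteq> a"
  and z_support_subset: "z_support p a \<subseteq> a"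
  by (auto simp: x_support_def z_support_def)

lemma circuit_pauli:
  assumes "\<psi> \<in> states n"
  shows "circuit n (\<lambda>i. pauli1 (p i)) \<psi> =
    (\<lambda>x. (\<Prod>i<n. if p i = 2 then \<i> else 1) *
      Xop (x_support p {0..<n}) (Zop (z_support p {0..<n}) \<psi>) x)"
proof -
  let ?X = "x_support p {0..<n}" and ?Z = "z_support p {0..<n}"
  have X: "?X \<subseteq> {0..<n}" and Z: "?Z \<subseteq> {0..<n}"
    by (auto simp: x_support_def z_support_def)
  have pauli1_XZ: "pauli1 c = (\<lambda>a b. (if c = 2 then \<i> else 1) *
      mmult1 (if c = 1 \<or> c = 2 then pauli1 1 else pauli1 0) (if c = 2 \<or> c = 3 then pauli1 3 else pauli1 0) a b)"
    for c
    by (auto simp: fun_eq_iff mmult1_expand pauli1_def)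
  have "circuit n (\<lambda>i. pauli1 (p i)) =
      circuit n (\<lambda>i a b. (if p i = 2 then \<i> else 1) * mmult1 (pauli_gates 1 ?X i) (pauli_gates 3 ?Z i) a b)"
    by (intro circuit_cong) (subst pauli1_XZ, auto simp: pauli_gates_def x_support_def z_support_def)
  moreover have "circuit n (\<lambda>i. mmult1 (pauli_gates 1 ?X i) (pauli_gates 3 ?Z i)) \<psi> =
      circuit n (pauli_gates 1 ?X) (circuit n (pauli_gates 3 ?Z) \<psi>)"
    by (rule circuit_mmult1[symmetric, OF assms])
  moreover have "\<dots> = Xop ?X (Zop ?Z \<psi>)"
    by (simp only: Zop_eq_circuit[OF assms Z] Xop_eq_circuit[OF circuit_in_states X])
  ultimately show ?thesis
    by (simp only: circuit_scale_gates)
qed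

lemma circuit_pauli_gates_commute:
  assumes u: "\<And>i. i < n \<Longrightarrow> unitary1 (g i)"
    and conj: "\<And>i. i < n \<Longrightarrow> conj1 (g i) (pauli1 P) = (\<lambda>a b. c i * pauli1 (p i) a b)"
    and c: "\<And>i. i < n \<Longrightarrow> c i \<noteq> 0"
    and a: "a \<subseteq> {0..<n}"
  obtains \<kappa> where "\<kappa> \<noteq> 0" "\<And>\<psi>. \<psi> \<in> states n \<Longrightarrow> circuit n g (circuit n (pauli_gates P a) \<psi>) =
      (\<lambda>x. \<kappa> * Xop (x_support p a) (Zop (z_support p a) (circuit n g \<psi>)) x)"
proof -
  define d where "d i = (if i \<in> a then p i else 0)" for i
  define c' where "c' i = (if i \<in> a then c i else 1)" for i
  have gates: "mmult1 (g i) (pauli_gates P a i) = mmult1 (\<lambda>x y. c' i * pauli1 (d i) x y) (g i)" if "i < n" for i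
  proof (cases "i \<in> a")
    case True
    have "mmult1 (g i) (pauli1 P) = mmult1 (conj1 (g i) (pauli1 P)) (g i)"
      by (rule mmult1_conj1[OF u[OF that], symmetric])
    then show ?thesis
      using True by (simp only: conj[OF that] pauli_gates_def c'_def d_def if_True)
  qed (simp add: pauli_gates_def c'_def d_def)
  have supports: "x_support d {0..<n} = x_support p a" "z_support d {0..<n} = z_support p a"
    using a by (auto simp: x_support_def z_support_def d_def)
  have "circuit n g (circuit n (pauli_gates P a) \<psi>) =
      (\<lambda>x. ((\<Prod>i<n. c' i) * (\<Prod>i<n. if d i = 2 then \<i> else 1)) *
        Xop (x_support p a) (Zop (z_support p a) (circuit n g \<psi>)) x)" if \<psi>: "\<psi> \<in> states n" for \<psi>
  proof -
    have "circuit n g (circuit n (pauli_gates P a) \<psi>) =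
        circuit n (\<lambda>i. mmult1 (\<lambda>x y. c' i * pauli1 (d i) x y) (g i)) \<psi>"
      unfolding circuit_mmult1[OF \<psi>] by (rule fun_cong[where x = \<psi>], rule circuit_cong) (simp add: gates)
    also have "\<dots> = circuit n (\<lambda>i x y. c' i * pauli1 (d i) x y) (circuit n g \<psi>)"
      by (rule circuit_mmult1[symmetric, OF \<psi>])
    also have "\<dots> = (\<lambda>x. (\<Prod>i<n. c' i) * circuit n (\<lambda>i. pauli1 (d i)) (circuit n g \<psi>) x)"
      by (rule circuit_scale_gates)
    also have "\<dots> = (\<lambda>x. (\<Prod>i<n. c' i) * ((\<Prod>i<n. if d i = 2 then \<i> else 1) *
        Xop (x_support d {0..<n}) (Zop (z_support d {0..<n}) (circuit n g \<psi>)) x))"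
      by (simp only: circuit_pauli[OF circuit_in_states])
    finally show ?thesis
      unfolding supports by (simp only: mult.assoc)
  qed
  moreover have "(\<Prod>i<n. c' i) * (\<Prod>i<n. if d i = 2 then \<i> else 1) \<noteq> 0"
    using c by (simp add: prod_zero_iff c'_def)
  ultimately show ?thesis
    using that by blast
qed

lemma circuit_id: "\<psi> \<in> states n \<Longrightarrow> circuit n (\<lambda>i. pauli1 0) \<psi> = \<psi>"
  using Xop_eq_circuit[of \<psi> n "{}"] unfolding pauli_gates_def by (simp add: Xop_def)

lemma funpow_circuit: "\<psi> \<in> states n \<Longrightarrow> (circuit n g ^^ m) \<psi> = circuit n (\<lambda>i. gate_pow (g i) m) \<psi>"
  by (induction m) (simp_all add: circuit_id circuit_mmult1)

lemma one_local_clifford_power_scalar: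
  assumes "one_local_clifford n g"
  obtains N L where "N > 0" "L \<noteq> 0" "\<And>\<psi>. \<psi> \<in> states n \<Longrightarrow> (circuit n g ^^ N) \<psi> = (\<lambda>x. L * \<psi> x)"
proof -
  have "\<exists>q. i < n \<longrightarrow> fst q > 0 \<and> snd q \<noteq> 0 \<and> gate_pow (g i) (fst q) = (\<lambda>a b. snd q * pauli1 0 a b)" for i
  proof (cases "i < n")
    case i: True
    have "clifford1 (g i)"
      using assms i by (simp add: one_local_clifford_def)
    then obtain N l where "N > 0" "l \<noteq> 0" "gate_pow (g i) N = (\<lambda>a b. l * pauli1 0 a b)"
      by (rule clifford1_power_scalar)
    then show ?thesis
      by (intro exI[of _ "(N, l)"]) simp
  qed simp
  then obtain q where q: "\<And>i. i < n \<Longrightarrow> fst (q i) > 0 \<and> snd (q i) \<noteq> 0 \<and>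
      gate_pow (g i) (fst (q i)) = (\<lambda>a b. snd (q i) * pauli1 0 a b)"
    by (metis choice)
  define N where "N = (\<Prod>i<n. fst (q i))"
  define L where "L = (\<Prod>i<n. snd (q i) ^ (N div fst (q i)))"
  have "(circuit n g ^^ N) \<psi> = (\<lambda>x. L * \<psi> x)" if \<psi>: "\<psi> \<in> states n" for \<psi>
  proof -
    have gate_pow_N: "gate_pow (g i) N = (\<lambda>a b. snd (q i) ^ (N div fst (q i)) * pauli1 0 a b)" if "i < n" for i
      using q[OF that] that unfolding N_def by (intro gate_pow_multiple_scalar dvd_prodI) auto
    have "(circuit n g ^^ N) \<psi> = circuit n (\<lambda>i a b. snd (q i) ^ (N div fst (q i)) * pauli1 0 a b) \<psi>"
      unfolding funpow_circuit[OF \<psi>] by (rule fun_cong[where x = \<psi>], rule circuit_cong) (simp add: gate_pow_N)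
    then show ?thesis
      unfolding L_def circuit_scale_gates circuit_id[OF \<psi>] .
  qed
  moreover have "N > 0" "L \<noteq> 0"
    using q by (simp_all add: N_def L_def prod_pos)
  ultimately show ?thesis
    using that by blast
qed

section \<open>The codespace and its logical basis\<close>

lemma Zop_fixed_iff: "Zop b \<psi> = \<psi> \<longleftrightarrow> (\<forall>x. odd (card (x \<inter> b)) \<longrightarrow> \<psi> x = 0)"
proof
  assume h: "Zop b \<psi> = \<psi>"
  show "\<forall>x. odd (card (x \<inter> b)) \<longrightarrow> \<psi> x = 0"
  proof (intro allI impI)
    fix x
    assume "odd (card (x \<inter> b))"
    moreover have "(-1) ^ card (x \<inter> b) * \<psi> x = \<psi> x"
      using fun_cong[OF h, of x] by (simp add: Zop_def)
    ultimately show "\<psi> x = 0"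
      by simp
  qed
next
  assume h: "\<forall>x. odd (card (x \<inter> b)) \<longrightarrow> \<psi> x = 0"
  show "Zop b \<psi> = \<psi>"
  proof
    fix x
    show "Zop b \<psi> x = \<psi> x"
      using h[rule_format, of x] by (cases "even (card (x \<inter> b))") (auto simp: Zop_def)
  qed
qed

lemma Xop_empty [simp]: "Xop {} \<phi> = \<phi>"
  and Zop_empty [simp]: "Zop {} \<phi> = \<phi>"
  by (simp_all add: Xop_def Zop_def)

lemma Xop_fixed_iff: "Xop a \<psi> = \<psi> \<longleftrightarrow> (\<forall>x. \<psi> (sdiff x a) = \<psi> x)"
  by (auto simp: Xop_def fun_eq_iff)

definition coset_state :: "nat set set \<Rightarrow> nat set \<Rightarrow> state" where
  "coset_state A x = (\<lambda>y. if sdiff x y \<in> A then 1 else 0)"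

lemma Xop_coset_state: "Xop a (coset_state A x) = coset_state A (sdiff x a)"
proof -
  have "sdiff x (sdiff y a) = sdiff (sdiff x a) y" for y
    by auto
  then show ?thesis
    unfolding Xop_def coset_state_def by simp
qed

primrec f2_sum :: "(nat \<Rightarrow> nat set) \<Rightarrow> nat set \<Rightarrow> nat \<Rightarrow> nat set" where
  "f2_sum u m 0 = {}"
| "f2_sum u m (Suc j) = (if j \<in> m then sdiff (f2_sum u m j) (u j) else f2_sum u m j)"

lemma f2_sum_sdiff: "f2_sum u (sdiff m D) j = sdiff (f2_sum u m j) (f2_sum u D j)"
  by (induction j) (auto simp: sdiff_def)

lemma f2_sum_eq_empty: "(\<And>i. i < j \<Longrightarrow> i \<notin> m) \<Longrightarrow> f2_sum u m j = {}"
  by (induction j) auto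

lemma f2_sum_singleton: "j < k \<Longrightarrow> f2_sum u {j} k = u j"
proof (induction k)
  case (Suc k)
  show ?case
  proof (cases "j < k")
    case False
    then have "j = k"
      using Suc by simp
    moreover have "f2_sum u {k} k = {}"
      by (rule f2_sum_eq_empty) simp
    ultimately show ?thesis
      by simp
  qed (use Suc in simp)
qed simp

locale css_with_logicals =
  fixes n :: nat and A B :: "nat set set" and u v :: "nat \<Rightarrow> nat set"
  assumes css: "css_code n A B" and logicals: "css_logicals n A B u v"
begin

abbreviation "k \<equiv> num_logical n A B"
abbreviation "Q \<equiv> codespace n A B"

lemma subspace_A: "f2_subspace n A" and subspace_B: "f2_subspace n B"
  and even_A_B: "a \<in> A \<Longrightarrow> b \<in> B \<Longrightarrow> even (card (a \<inter> b))"
  using css by (auto simp: css_code_def)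

lemma u_subset: "j < k \<Longrightarrow> u j \<subseteq> {0..<n}" and v_subset: "j < k \<Longrightarrow> v j \<subseteq> {0..<n}"
  and even_u_B: "j < k \<Longrightarrow> b \<in> B \<Longrightarrow> even (card (u j \<inter> b))"
  and even_v_A: "j < k \<Longrightarrow> a \<in> A \<Longrightarrow> even (card (v j \<inter> a))"
  and odd_v_u_iff: "i < k \<Longrightarrow> j < k \<Longrightarrow> odd (card (v i \<inter> u j)) \<longleftrightarrow> i = j"
  using logicals unfolding css_logicals_def Let_def by blast+

lemma finite_u: "j < k \<Longrightarrow> finite (u j)"
  using u_subset finite_subset[OF _ finite_atLeastLessThan] by blast

lemma finite_A_elem: "a \<in> A \<Longrightarrow> finite a"
  using f2_subspace_finite_elem[OF subspace_A] .

lemma u_notin_A: "j < k \<Longrightarrow> u j \<notin> A"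
  using even_v_A odd_v_u_iff by blast

lemma v_notin_B: "j < k \<Longrightarrow> v j \<notin> B"
  using even_u_B odd_v_u_iff by (metis inf_commute)

lemma A_subset_perp: "A \<subseteq> perp n B"
  using even_A_B f2_subspace_subset[OF subspace_A] by (auto simp: perp_def inf_commute)

lemma f2_sum_in_perp: "j \<le> k \<Longrightarrow> f2_sum u m j \<in> perp n B"
proof (induction j)
  case (Suc j)
  have "u j \<in> perp n B"
    using Suc u_subset even_u_B by (auto simp: perp_def inf_commute)
  then show ?case
    using Suc f2_subspace_sdiff[OF f2_subspace_perp] by auto
qed (simp add: f2_subspace_empty[OF f2_subspace_perp])

lemma finite_f2_sum: "finite (f2_sum u m k)"
  using f2_sum_in_perp[of k m] finite_subset[OF _ finite_atLeastLessThan] by (auto simp: perp_def)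

lemma odd_card_v_Int_f2_sum: "i < k \<Longrightarrow> odd (card (v i \<inter> f2_sum u m k)) \<longleftrightarrow> i \<in> m"
proof -
  assume i: "i < k"
  have "j \<le> k \<Longrightarrow> odd (card (v i \<inter> f2_sum u m j)) \<longleftrightarrow> i \<in> m \<and> i < j" for j
  proof (induction j)
    case (Suc j)
    have "finite (f2_sum u m j)"
      using f2_sum_in_perp[of j m] Suc.prems finite_subset[OF _ finite_atLeastLessThan]
      by (auto simp: perp_def)
    then show ?case
      using Suc odd_v_u_iff[OF i, of j] even_card_sdiff_Int[OF _ finite_u, of "f2_sum u m j" j "v i"]
      by (auto simp: less_Suc_eq)
  qed simp
  then show ?thesis
    using i by auto
qed

lemma f2_sum_eq_mod_A:
  assumes "m \<subseteq> {0..<k}" "m' \<subseteq> {0..<k}" "sdiff (f2_sum u m k) (f2_sum u m' k) \<in> A"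
  shows "m = m'"
proof (rule ccontr)
  assume "m \<noteq> m'"
  then obtain i where "i \<in> sdiff m m'"
    by (metis equals0I sdiff_eq_empty_iff)
  moreover then have "i < k"
    using assms by auto
  ultimately show False
    using assms(3) even_v_A odd_card_v_Int_f2_sum[of i "sdiff m m'"] by (auto simp: f2_sum_sdiff)
qed

definition logical_basis :: "nat set \<Rightarrow> state" where
  "logical_basis m = coset_state A (f2_sum u m k)"

lemma coset_state_in_states:
  assumes "x \<subseteq> {0..<n}"
  shows "coset_state A x \<in> states n"
  unfolding states_def
proof (intro CollectI allI impI)
  fix y
  assume y: "\<not> y \<subseteq> {0..<n}"
  have "sdiff x y \<notin> A"
  proof
    assume "sdiff x y \<in> A"
    then have "sdiff x (sdiff x y) \<subseteq> {0..<n}"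
      using f2_subspace_subset[OF subspace_A] assms sdiff_subsetI by blast
    then show False
      using y by simp
  qed
  then show "coset_state A x y = 0"
    by (simp add: coset_state_def)
qed

lemma coset_state_sdiff_A:
  assumes "a \<in> A"
  shows "coset_state A (sdiff x a) = coset_state A x"
proof -
  have "sdiff (sdiff (sdiff x a) y) a = sdiff x y" "sdiff (sdiff x y) a = sdiff (sdiff x a) y" for y
    by auto
  then have "sdiff (sdiff x a) y \<in> A \<longleftrightarrow> sdiff x y \<in> A" for y
    using f2_subspace_sdiff[OF subspace_A _ assms] by metis
  then show ?thesis
    by (simp add: coset_state_def)
qed

lemma Zop_coset_state:
  assumes x: "x \<in> perp n B" and b: "b \<in> B"
  shows "Zop b (coset_state A x) = coset_state A x"
proof -
  have "finite x"
    using x finite_subset[OF _ finite_atLeastLessThan] by (auto simp: perp_def)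
  \<comment> \<open>every \<open>y\<close> in the coset \<open>x + A\<close> has the same, even, parity against \<open>b\<close> as \<open>x\<close>\<close>
  have "even (card (y \<inter> b))" if "sdiff x y \<in> A" for y
  proof -
    have "even (card (b \<inter> sdiff x y))" "even (card (b \<inter> x))"
      using even_A_B[OF that b] x b by (auto simp: perp_def inf_commute)
    then have "even (card (b \<inter> sdiff x (sdiff x y)))"
      using even_card_sdiff_Int[OF \<open>finite x\<close> finite_A_elem[OF that], of b] by simp
    then show ?thesis
      by (simp add: inf_commute)
  qed
  then show ?thesis
    unfolding Zop_fixed_iff coset_state_def by auto
qed

lemma coset_state_in_codespace: "x \<in> perp n B \<Longrightarrow> coset_state A x \<in> Q"
  unfolding codespace_def
  by (auto simp: perp_def coset_state_in_states Xop_coset_state coset_state_sdiff_A Zop_coset_state)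

lemma logical_basis_in_codespace: "logical_basis m \<in> Q"
  unfolding logical_basis_def by (rule coset_state_in_codespace[OF f2_sum_in_perp]) simp

lemma Xop_logical_basis: "j < k \<Longrightarrow> Xop (u j) (logical_basis m) = logical_basis (sdiff m {j})"
  unfolding logical_basis_def Xop_coset_state by (simp add: f2_sum_sdiff f2_sum_singleton)

lemma Zop_logical_basis:
  assumes j: "j < k"
  shows "Zop (v j) (logical_basis m) = (\<lambda>z. (if j \<in> m then -1 else 1) * logical_basis m z)"
proof
  fix z
  show "Zop (v j) (logical_basis m) z = (if j \<in> m then -1 else 1) * logical_basis m z"
  proof (cases "sdiff (f2_sum u m k) z \<in> A")
    case True
    have "z = sdiff (f2_sum u m k) (sdiff (f2_sum u m k) z)"
      by simp
    then have "(-1::complex) ^ card (z \<inter> v j) =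
        (-1) ^ card (f2_sum u m k \<inter> v j) * (-1) ^ card (sdiff (f2_sum u m k) z \<inter> v j)"
      using minus_one_power_card_sdiff_Int[OF finite_f2_sum[of m] finite_A_elem[OF True], of "v j"] by metis
    also have "\<dots> = (if j \<in> m then -1 else 1)"
      using even_v_A[OF j True] odd_card_v_Int_f2_sum[OF j, of m]
      by (cases "j \<in> m") (simp_all add: inf_commute minus_one_power_iff)
    finally show ?thesis
      using True by (simp add: Zop_def logical_basis_def coset_state_def)
  qed (simp add: Zop_def logical_basis_def coset_state_def)
qed

lemma codespace_vanishes:
  assumes "\<chi> \<in> Q" "y \<notin> perp n B"
  shows "\<chi> y = 0"
proof (cases "y \<subseteq> {0..<n}")
  case True
  then obtain b where "b \<in> B" "odd (card (y \<inter> b))"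
    using assms(2) by (auto simp: perp_def inf_commute)
  then show ?thesis
    using assms(1) by (auto simp: codespace_def Zop_fixed_iff)
qed (use assms(1) in \<open>auto simp: codespace_def states_def\<close>)

text \<open>The cosets \<open>f2_sum u m k + A\<close>, \<open>m \<subseteq> {0..<k}\<close>, are disjoint and, by counting, exhaust
  \<open>perp n B\<close>.\<close>

lemma card_perp_B: "card (perp n B) = 2 ^ k * card A"
proof -
  obtain dP where dP: "card (perp n B) = 2 ^ dP"
    using card_f2_subspace_power[OF f2_subspace_perp] by blast
  have "2 ^ dimF2 B * 2 ^ dP = (2::nat) ^ n"
    using card_mult_card_perp[OF subspace_B] card_eq_power_dimF2[OF subspace_B] dP by simp
  then have "(2::nat) ^ (dimF2 B + dP) = 2 ^ n"
    by (simp add: power_add)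
  then have n: "dimF2 B + dP = n"
    by (metis power_inject_exp one_less_numeral_iff semiring_norm(76))
  have "card A \<le> card (perp n B)"
    using A_subset_perp card_mono[OF finite_f2_subspace[OF f2_subspace_perp]] by blast
  then have "(2::nat) ^ dimF2 A \<le> 2 ^ dP"
    using card_eq_power_dimF2[OF subspace_A] dP by simp
  then have "dimF2 A \<le> dP"
    by simp
  moreover have "k = dP - dimF2 A"
    unfolding num_logical_def using n by simp
  ultimately have "(2::nat) ^ dP = 2 ^ k * 2 ^ dimF2 A"
    by (simp add: power_add[symmetric])
  then show ?thesis
    unfolding dP card_eq_power_dimF2[OF subspace_A] .
qed

lemma perp_B_eq_f2_sum_mod_A:
  assumes y: "y \<in> perp n B"
  obtains m where "m \<subseteq> {0..<k}" "sdiff (f2_sum u m k) y \<in> A"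
proof -
  define S where "S = (\<Union>m\<in>Pow {0..<k}. sdiff (f2_sum u m k) ` A)"
  have disjoint: "sdiff (f2_sum u m k) ` A \<inter> sdiff (f2_sum u m' k) ` A = {}"
    if "m \<in> Pow {0..<k}" "m' \<in> Pow {0..<k}" "m \<noteq> m'" for m m'
  proof (rule ccontr)
    assume "sdiff (f2_sum u m k) ` A \<inter> sdiff (f2_sum u m' k) ` A \<noteq> {}"
    then obtain a a' where aa: "a \<in> A" "a' \<in> A" "sdiff (f2_sum u m k) a = sdiff (f2_sum u m' k) a'"
      by blast
    then have "sdiff (f2_sum u m k) (f2_sum u m' k) = sdiff a a'"
      by auto
    then show False
      using f2_sum_eq_mod_A f2_subspace_sdiff[OF subspace_A aa(1,2)] that by auto
  qed
  have "card S = (\<Sum>m\<in>Pow {0..<k}. card (sdiff (f2_sum u m k) ` A))"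
    unfolding S_def using finite_f2_subspace[OF subspace_A] disjoint by (intro card_UN_disjoint) auto
  also have "\<dots> = (\<Sum>m\<in>Pow {0..<k}. card A)"
    by (intro sum.cong refl card_image inj_on_sdiff)
  also have "\<dots> = card (perp n B)"
    by (simp add: card_Pow card_perp_B)
  finally have "card S = card (perp n B)" .
  moreover have "S \<subseteq> perp n B"
    unfolding S_def using f2_subspace_sdiff[OF f2_subspace_perp] f2_sum_in_perp[of k] A_subset_perp by blast
  ultimately have "S = perp n B"
    using card_subset_eq[OF finite_f2_subspace[OF f2_subspace_perp]] by blast
  then obtain m a where "m \<subseteq> {0..<k}" "a \<in> A" "y = sdiff (f2_sum u m k) a"
    using y unfolding S_def by blast
  then show ?thesis
    using that by simp
qed

lemma codespace_expand:
  assumes \<chi>: "\<chi> \<in> Q"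
  shows "\<chi> = (\<lambda>y. \<Sum>m\<in>Pow {0..<k}. \<chi> (f2_sum u m k) * logical_basis m y)"
proof
  fix y
  show "\<chi> y = (\<Sum>m\<in>Pow {0..<k}. \<chi> (f2_sum u m k) * logical_basis m y)"
  proof (cases "y \<in> perp n B")
    case False
    then show ?thesis
      using codespace_vanishes[OF \<chi>] codespace_vanishes[OF logical_basis_in_codespace] by simp
  next
    case True
    then obtain m0 where m0: "m0 \<subseteq> {0..<k}" "sdiff (f2_sum u m0 k) y \<in> A"
      by (rule perp_B_eq_f2_sum_mod_A)
    have logical_basis_y: "logical_basis m y = (if m = m0 then 1 else 0)" if m: "m \<in> Pow {0..<k}" for m
    proof (cases "sdiff (f2_sum u m k) y \<in> A")
      case True
      have "sdiff (f2_sum u m k) (f2_sum u m0 k) = sdiff (sdiff (f2_sum u m k) y) (sdiff (f2_sum u m0 k) y)"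
        by auto
      then have "m = m0"
        using f2_subspace_sdiff[OF subspace_A True m0(2)] f2_sum_eq_mod_A m m0(1) by auto
      then show ?thesis
        using True by (simp add: logical_basis_def coset_state_def)
    qed (use m0 in \<open>auto simp: logical_basis_def coset_state_def\<close>)
    have "(\<Sum>m\<in>Pow {0..<k}. \<chi> (f2_sum u m k) * logical_basis m y) =
        (\<Sum>m\<in>Pow {0..<k}. if m = m0 then \<chi> (f2_sum u m k) else 0)"
      by (rule sum.cong) (simp_all add: logical_basis_y)
    also have "\<dots> = \<chi> (f2_sum u m0 k)"
      using m0(1) by simp
    also have "\<dots> = \<chi> (sdiff y (sdiff (f2_sum u m0 k) y))"
      by (metis sdiff_cancel(2) sdiff_commute)
    also have "\<dots> = \<chi> y"
      using \<chi> m0(2) by (simp add: codespace_def Xop_fixed_iff)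
    finally show ?thesis
      by simp
  qed
qed

end

lemma pauli1_orthogonal:
  "(\<Sum>c\<in>{0..<4::nat}. cnj (pauli1 c a b) * pauli1 c a' b') = (if a = a' \<and> b = b' then 2 else 0)"
proof -
  have "{0..<4::nat} = {0, 1, 2, 3}"
    by auto
  then show ?thesis
    by (cases a; cases b; cases a'; cases b') (simp_all add: pauli1_def)
qed

lemma pstr_orthogonal:
  assumes "x \<subseteq> {0..<k}" "y \<subseteq> {0..<k}" "m' \<subseteq> {0..<k}" "m \<subseteq> {0..<k}"
  shows "(\<Sum>s\<in>pauli_strings k. cnj (pstr k s x y) * pstr k s m' m) = (if x = m' \<and> y = m then 2 ^ k else 0)"
proof -
  have "(\<Sum>s\<in>pauli_strings k. cnj (pstr k s x y) * pstr k s m' m) =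
        (\<Sum>s\<in>PiE {..<k} (\<lambda>_. {0..<4}). \<Prod>j\<in>{..<k}. cnj (pauli1 (s j) (j \<in> x) (j \<in> y)) * pauli1 (s j) (j \<in> m') (j \<in> m))"
    unfolding pauli_strings_def pstr_def atLeast0LessThan by (simp add: prod.distrib)
  also have "\<dots> = (\<Prod>j\<in>{..<k}. \<Sum>c\<in>{0..<4}. cnj (pauli1 c (j \<in> x) (j \<in> y)) * pauli1 c (j \<in> m') (j \<in> m))"
    by (rule prod_sum_PiE[symmetric]) auto
  also have "\<dots> = (\<Prod>j\<in>{..<k}. if (j \<in> x) = (j \<in> m') \<and> (j \<in> y) = (j \<in> m) then 2 else 0)"
    by (simp add: pauli1_orthogonal)
  also have "\<dots> = (if x = m' \<and> y = m then 2 ^ k else 0)"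
  proof (cases "x = m' \<and> y = m")
    case True then show ?thesis by simp
  next
    case False
    then obtain j where "(j \<in> x) \<noteq> (j \<in> m') \<or> (j \<in> y) \<noteq> (j \<in> m)"
      by blast
    moreover from this have "j < k"
      using assms by auto
    ultimately have "(\<Prod>j\<in>{..<k}. if (j \<in> x) = (j \<in> m') \<and> (j \<in> y) = (j \<in> m) then 2 else 0) = (0::complex)"
      by (intro prod_zero) auto
    then show ?thesis
      using False by simp
  qed
  finally show ?thesis .
qed

lemma pauli_expansion:
  assumes "m' \<subseteq> {0..<k}" "m \<subseteq> {0..<k}"
  shows "(\<Sum>s\<in>pauli_strings k. pcoef k W s * pstr k s m' m) = W m' m"
proof -
  have "(\<Sum>s\<in>pauli_strings k. pcoef k W s * pstr k s m' m) =
      (\<Sum>x\<in>Pow {0..<k}. \<Sum>y\<in>Pow {0..<k}. W x y * (\<Sum>s\<in>pauli_strings k. cnj (pstr k s x y) * pstr k s m' m) / 2 ^ k)"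
    unfolding pcoef_def
    by (simp add: sum_distrib_left sum_distrib_right sum_divide_distrib sum.swap[of _ "pauli_strings k"] mult_ac)
  also have "\<dots> = (\<Sum>x\<in>Pow {0..<k}. \<Sum>y\<in>Pow {0..<k}. if x = m' \<and> y = m then W x y else 0)"
    by (intro sum.cong refl) (simp add: pstr_orthogonal assms)
  also have "\<dots> = (\<Sum>x\<in>Pow {0..<k}. if x = m' then W m' m else 0)"
    using assms by (intro sum.cong refl) (cases "x = m'", simp_all)
  also have "\<dots> = W m' m"
    using assms by simp
  finally show ?thesis .
qed

lemma lpauli1_scale: "lpauli1 a b c (\<lambda>x. d * \<phi> x) = (\<lambda>x. d * lpauli1 a b c \<phi> x)"
  by (auto simp: lpauli1_def Xop_def Zop_def fun_eq_iff mult_ac)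

lemma lpauli_scale: "lpauli u v s j (\<lambda>x. d * \<phi> x) = (\<lambda>x. d * lpauli u v s j \<phi> x)"
  by (induction j arbitrary: \<phi>) (simp_all add: lpauli1_scale)

definition x_positions :: "(nat \<Rightarrow> nat) \<Rightarrow> nat \<Rightarrow> nat set" where
  "x_positions s j = {i. i < j \<and> (s i = 1 \<or> s i = 2)}"

context css_with_logicals begin

lemma lpauli1_logical_basis:
  assumes j: "j < k"
  shows "lpauli1 (u j) (v j) c (logical_basis m) =
     (\<lambda>x. pauli1 c (j \<in> (if c = 1 \<or> c = 2 then sdiff m {j} else m)) (j \<in> m) *
           logical_basis (if c = 1 \<or> c = 2 then sdiff m {j} else m) x)"
proof -
  have X: "Xop (u j) (\<lambda>z. d * logical_basis m z) = (\<lambda>x. d * logical_basis (sdiff m {j}) x)" for d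
    using Xop_logical_basis[OF j, of m] by (auto simp: Xop_def fun_eq_iff)
  consider "c = 1" | "c = 2" | "c = 3" | "c \<notin> {1, 2, 3}"
    by auto
  then show ?thesis
  proof cases
    case 1
    then show ?thesis
      by (simp add: lpauli1_def Xop_logical_basis[OF j] pauli1_def)
  next
    case 2
    then show ?thesis
      by (simp add: lpauli1_def Zop_logical_basis[OF j] X pauli1_def fun_eq_iff)
  next
    case 3
    then show ?thesis
      by (simp add: lpauli1_def Zop_logical_basis[OF j] pauli1_def fun_eq_iff)
  qed (simp add: lpauli1_def pauli1_def)
qed

lemma lpauli_logical_basis:
  "j \<le> k \<Longrightarrow> lpauli u v s j (logical_basis m) = (\<lambda>x.
    (\<Prod>i<j. pauli1 (s i) (i \<in> sdiff m (x_positions s j)) (i \<in> m)) * logical_basis (sdiff m (x_positions s j)) x)"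
proof (induction j arbitrary: m)
  case 0
  then show ?case
    by (simp add: x_positions_def)
next
  case (Suc j)
  define m' where "m' = (if s j = 1 \<or> s j = 2 then sdiff m {j} else m)"
  have jk: "j < k"
    using Suc.prems by simp
  have F: "sdiff m' (x_positions s j) = sdiff m (x_positions s (Suc j))"
    unfolding m'_def x_positions_def by (auto simp: less_Suc_eq)
  have same: "i < j \<Longrightarrow> (i \<in> m') = (i \<in> m)" for i
    unfolding m'_def by auto
  have jm: "(j \<in> sdiff m (x_positions s (Suc j))) = (j \<in> m')"
    unfolding m'_def x_positions_def by auto
  have "lpauli u v s (Suc j) (logical_basis m) = lpauli u v s j (lpauli1 (u j) (v j) (s j) (logical_basis m))"
    by simp
  also have "\<dots> = lpauli u v s j (\<lambda>x. pauli1 (s j) (j \<in> m') (j \<in> m) * logical_basis m' x)"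
    unfolding lpauli1_logical_basis[OF jk] m'_def by simp
  also have "\<dots> = (\<lambda>x. pauli1 (s j) (j \<in> m') (j \<in> m) * lpauli u v s j (logical_basis m') x)"
    by (rule lpauli_scale)
  also have "\<dots> = (\<lambda>x. pauli1 (s j) (j \<in> m') (j \<in> m) *
      ((\<Prod>i<j. pauli1 (s i) (i \<in> sdiff m' (x_positions s j)) (i \<in> m')) * logical_basis (sdiff m' (x_positions s j)) x))"
    using Suc.IH[of m'] Suc.prems by simp
  also have "\<dots> = (\<lambda>x. (\<Prod>i<Suc j. pauli1 (s i) (i \<in> sdiff m (x_positions s (Suc j))) (i \<in> m)) * logical_basis (sdiff m (x_positions s (Suc j))) x)"
  proof -
    have pe: "(\<Prod>i<j. pauli1 (s i) (i \<in> sdiff m (x_positions s (Suc j))) (i \<in> m)) =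
          (\<Prod>i<j. pauli1 (s i) (i \<in> sdiff m' (x_positions s j)) (i \<in> m'))"
      by (rule prod.cong) (auto simp: F same)
    have P: "(\<Prod>i<Suc j. pauli1 (s i) (i \<in> sdiff m (x_positions s (Suc j))) (i \<in> m)) =
       (\<Prod>i<j. pauli1 (s i) (i \<in> sdiff m' (x_positions s j)) (i \<in> m')) * pauli1 (s j) (j \<in> m') (j \<in> m)"
      by (simp only: prod.lessThan_Suc jm pe)
    show ?thesis
      unfolding P F by (simp add: mult_ac)
  qed
  finally show ?case .
qed

lemma lpauli_logical_basis_sum:
  assumes m: "m \<subseteq> {0..<k}"
  shows "lpauli u v s k (logical_basis m) = (\<lambda>x. \<Sum>m'\<in>Pow {0..<k}. pstr k s m' m * logical_basis m' x)"
proof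
  fix x
  define F where "F = sdiff m (x_positions s k)"
  have Fs: "F \<subseteq> {0..<k}"
    unfolding F_def x_positions_def using m by auto
  have "pstr k s m' m = 0" if m': "m' \<subseteq> {0..<k}" "m' \<noteq> F" for m'
  proof -
    obtain i where "(i \<in> m') \<noteq> (i \<in> F)"
      using m'(2) by blast
    moreover from this have "i < k"
      using m'(1) Fs by auto
    moreover from calculation have "pauli1 (s i) (i \<in> m') (i \<in> m) = 0"
      unfolding F_def x_positions_def by (auto simp: pauli1_def)
    ultimately have "\<exists>a\<in>{..<k}. pauli1 (s a) (a \<in> m') (a \<in> m) = 0"
      by blast
    then show ?thesis
      unfolding pstr_def by (simp add: prod_zero)
  qed
  then have "(\<Sum>m'\<in>Pow {0..<k}. pstr k s m' m * logical_basis m' x) =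
      (\<Sum>m'\<in>Pow {0..<k}. if m' = F then pstr k s F m * logical_basis F x else 0)"
    by (intro sum.cong) auto
  also have "\<dots> = pstr k s F m * logical_basis F x"
    using Fs by simp
  finally show "lpauli u v s k (logical_basis m) x = (\<Sum>m'\<in>Pow {0..<k}. pstr k s m' m * logical_basis m' x)"
    using lpauli_logical_basis[of k s m] by (simp add: F_def pstr_def)
qed

lemma logical_action_logical_basis:
  assumes act: "has_logical_action n A B u v G W" and m: "m \<subseteq> {0..<k}"
  shows "G (logical_basis m) = (\<lambda>x. \<Sum>m'\<in>Pow {0..<k}. W m' m * logical_basis m' x)"
proof
  fix x
  have "G (logical_basis m) x = (\<Sum>s\<in>pauli_strings k. pcoef k W s * lpauli u v s k (logical_basis m) x)"
    using act logical_basis_in_codespace unfolding has_logical_action_def Let_def by metis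
  also have "\<dots> = (\<Sum>s\<in>pauli_strings k. \<Sum>m'\<in>Pow {0..<k}. pcoef k W s * pstr k s m' m * logical_basis m' x)"
    by (simp add: lpauli_logical_basis_sum[OF m] sum_distrib_left mult_ac)
  also have "\<dots> = (\<Sum>m'\<in>Pow {0..<k}. (\<Sum>s\<in>pauli_strings k. pcoef k W s * pstr k s m' m) * logical_basis m' x)"
    by (simp add: sum.swap[of _ "pauli_strings k"] sum_distrib_right)
  also have "\<dots> = (\<Sum>m'\<in>Pow {0..<k}. W m' m * logical_basis m' x)"
    by (rule sum.cong) (auto simp: pauli_expansion m)
  finally show "G (logical_basis m) x = (\<Sum>m'\<in>Pow {0..<k}. W m' m * logical_basis m' x)" .
qed

end

definition sum_linear :: "(state \<Rightarrow> state) \<Rightarrow> bool" where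
  "sum_linear F \<longleftrightarrow>
     (\<forall>M (c :: nat set \<Rightarrow> complex) \<phi>. F (\<lambda>y. \<Sum>m\<in>M. c m * \<phi> m y) = (\<lambda>y. \<Sum>m\<in>M. c m * F (\<phi> m) y))"

lemma sum_linear_Xop: "sum_linear (Xop a)"
  by (simp add: sum_linear_def Xop_def)

lemma sum_linear_Zop: "sum_linear (Zop b)"
  by (simp add: sum_linear_def Zop_def sum_distrib_left mult_ac)

lemma sum_linear_circuit: "sum_linear (circuit n g)"
  by (simp add: sum_linear_def circuit_sum)

lemma sum_linear_scale:
  assumes "sum_linear F"
  shows "F (\<lambda>y. c * \<phi> y) = (\<lambda>y. c * F \<phi> y)"
  using assms[unfolded sum_linear_def, rule_format, where M = "{{}}" and c = "\<lambda>_. c" and \<phi> = "\<lambda>_. \<phi>"] by simp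

context css_with_logicals
begin

lemma Xop_f2_sum_logical_basis: "Xop (f2_sum u D k) (logical_basis m) = logical_basis (sdiff m D)"
  unfolding logical_basis_def Xop_coset_state by (simp add: f2_sum_sdiff)

lemma codespace_scale: "\<phi> \<in> Q \<Longrightarrow> (\<lambda>x. c * \<phi> x) \<in> Q"
  unfolding codespace_def states_def by (auto simp: Xop_fixed_iff Zop_fixed_iff)

text \<open>Some power of a 1-local Clifford circuit is a nonzero scalar.\<close>

lemma circuit_onto_codespace:
  assumes "one_local_clifford n g" "logical_operator n A B (circuit n g)" "\<phi> \<in> Q"
  obtains \<chi> where "\<chi> \<in> Q" "circuit n g \<chi> = \<phi>"
proof -
  obtain N L where NL: "N > 0" "L \<noteq> 0" "\<And>\<psi>. \<psi> \<in> states n \<Longrightarrow> (circuit n g ^^ N) \<psi> = (\<lambda>x. L * \<psi> x)"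
    using one_local_clifford_power_scalar[OF assms(1)] by blast
  have in_Q: "(circuit n g ^^ m) \<phi> \<in> Q" for m
    using assms(2,3) by (induction m) (auto simp: logical_operator_def)
  have "circuit n g ((circuit n g ^^ (N - 1)) \<phi>) = (circuit n g ^^ N) \<phi>"
    using NL(1) by (metis Suc_diff_1 funpow.simps(2) o_apply)
  also have "\<dots> = (\<lambda>x. L * \<phi> x)"
    using NL(3) assms(3) by (simp add: codespace_def)
  finally have "circuit n g ((circuit n g ^^ (N - 1)) \<phi>) = (\<lambda>x. L * \<phi> x)" .
  then have "circuit n g (\<lambda>x. (1 / L) * (circuit n g ^^ (N - 1)) \<phi> x) = \<phi>"
    unfolding circuit_scale using NL(2) by simp
  then show ?thesis
    using that codespace_scale[OF in_Q] by blast
qed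

lemma intertwine_from_logical_basis:
  assumes "sum_linear G" "sum_linear F1" "sum_linear F2"
    and "\<And>m. m \<subseteq> {0..<k} \<Longrightarrow> G (F1 (logical_basis m)) = F2 (G (logical_basis m))"
    and "\<chi> \<in> Q"
  shows "G (F1 \<chi>) = F2 (G \<chi>)"
proof -
  let ?c = "\<lambda>m. \<chi> (f2_sum u m k)"
  have "G (F1 \<chi>) = (\<lambda>y. \<Sum>m\<in>Pow {0..<k}. ?c m * G (F1 (logical_basis m)) y)"
    using assms(1,2) codespace_expand[OF assms(5)] unfolding sum_linear_def by metis
  also have "\<dots> = (\<lambda>y. \<Sum>m\<in>Pow {0..<k}. ?c m * F2 (G (logical_basis m)) y)"
    using assms(4) by simp
  also have "\<dots> = F2 (G \<chi>)"
    using assms(1,3) codespace_expand[OF assms(5)] unfolding sum_linear_def by metis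
  finally show ?thesis .
qed

lemma intertwine_logical_action:
  assumes act: "has_logical_action n A B u v G W" and G: "sum_linear G"
    and F: "sum_linear F" "\<And>m. F (logical_basis m) = (\<lambda>x. s m * logical_basis (sdiff m D) x)"
    and F': "sum_linear F'" "\<And>m. F' (logical_basis m) = (\<lambda>x. s' m * logical_basis (sdiff m D') x)"
    and D: "D \<subseteq> {0..<k}" "D' \<subseteq> {0..<k}"
    and W: "\<And>m m'. m \<subseteq> {0..<k} \<Longrightarrow> m' \<subseteq> {0..<k} \<Longrightarrow>
      s m * W m' (sdiff m D) = s' (sdiff m' D') * W (sdiff m' D') m"
    and \<chi>: "\<chi> \<in> Q"
  shows "G (F \<chi>) = F' (G \<chi>)"
proof (rule intertwine_from_logical_basis[OF G F(1) F'(1) _ \<chi>])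
  fix m
  assume m: "m \<subseteq> {0..<k}"
  then have mD: "sdiff m D \<subseteq> {0..<k}"
    using D(1) by (rule sdiff_subsetI)
  have "G (F (logical_basis m)) = (\<lambda>x. \<Sum>m'\<in>Pow {0..<k}. s m * W m' (sdiff m D) * logical_basis m' x)"
    unfolding F(2) sum_linear_scale[OF G] logical_action_logical_basis[OF act mD]
    by (simp add: sum_distrib_left mult.assoc)
  also have "\<dots> = (\<lambda>x. \<Sum>m'\<in>Pow {0..<k}. s' (sdiff m' D') * W (sdiff m' D') m * logical_basis m' x)"
    using W[OF m] by simp
  also have "\<dots> = (\<lambda>x. \<Sum>m'\<in>Pow {0..<k}. W m' m * s' m' * logical_basis (sdiff m' D') x)"
    by (rule ext, rule sum.reindex_bij_witness[where i = "\<lambda>m'. sdiff m' D'" and j = "\<lambda>m'. sdiff m' D'"])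
      (use D in \<open>auto simp: mult_ac subset_iff\<close>)
  also have "\<dots> = F' (G (logical_basis m))"
    using F' unfolding logical_action_logical_basis[OF act m] sum_linear_def by (simp add: mult.assoc)
  finally show "G (F (logical_basis m)) = F' (G (logical_basis m))" .
qed

lemma pauli_agree_on_trivial_coset:
  assumes "\<And>y. Xop \<alpha> (Zop \<beta> (coset_state A {})) y = c * Xop \<gamma> (Zop \<delta> (coset_state A {})) y"
  shows "c \<noteq> 0" and "sdiff \<gamma> \<alpha> \<in> A"
proof -
  have A0: "{} \<in> A"
    by (rule f2_subspace_empty[OF subspace_A])
  show "c \<noteq> 0"
    using assms[of \<alpha>] A0 by (auto simp: Xop_def Zop_def coset_state_def)
  moreover have "Xop \<alpha> (Zop \<beta> (coset_state A {})) \<gamma> = c"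
    using assms[of \<gamma>] A0 by (simp add: Xop_def Zop_def coset_state_def)
  ultimately show "sdiff \<gamma> \<alpha> \<in> A"
    by (auto simp: Xop_def Zop_def coset_state_def split: if_splits)
qed

text \<open>Once the \<open>X\<close>-parts are known to differ by an element of \<open>A\<close>, comparing signs on the coset
  of \<open>x\<close> shows that \<open>sdiff \<beta> \<delta>\<close> is orthogonal to \<open>perp n B\<close>, hence lies in \<open>B\<close>.\<close>

lemma pauli_agree_on_cosets:
  assumes sub: "\<alpha> \<subseteq> {0..<n}" "\<beta> \<subseteq> {0..<n}" "\<gamma> \<subseteq> {0..<n}" "\<delta> \<subseteq> {0..<n}"
    and agree: "\<And>x. x \<in> perp n B \<Longrightarrow>
      Xop \<alpha> (Zop \<beta> (coset_state A x)) = (\<lambda>y. c * Xop \<gamma> (Zop \<delta> (coset_state A x)) y)"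
  shows "sdiff \<alpha> \<gamma> \<in> A \<and> sdiff \<beta> \<delta> \<in> B"
proof
  have fin: "finite \<beta>" "finite \<delta>" "finite (sdiff \<gamma> \<alpha>)"
    using sub finite_subset[OF _ finite_atLeastLessThan] by (metis finite_sdiff)+
  have empty_perp: "{} \<in> perp n B"
    by (auto simp: perp_def)
  have "c \<noteq> 0" "sdiff \<gamma> \<alpha> \<in> A"
    using pauli_agree_on_trivial_coset agree[OF empty_perp] by metis+
  then show "sdiff \<alpha> \<gamma> \<in> A"
    by (simp add: sdiff_commute)
  define w where "w = sdiff \<gamma> \<alpha>"
  have signs: "(-1::complex) ^ card (sdiff x w \<inter> \<beta>) = c * (-1) ^ card (x \<inter> \<delta>)" if "x \<in> perp n B" for x
  proof -
    have "sdiff (sdiff x \<gamma>) \<alpha> = sdiff x w"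
      unfolding w_def by auto
    moreover have "coset_state A x x = 1" "coset_state A x (sdiff x w) = 1"
      using f2_subspace_empty[OF subspace_A] \<open>sdiff \<gamma> \<alpha> \<in> A\<close> by (simp_all add: coset_state_def w_def)
    ultimately show ?thesis
      using fun_cong[OF agree[OF that], of "sdiff x \<gamma>"] by (simp add: Xop_def Zop_def)
  qed
  have "even (card (x \<inter> sdiff \<beta> \<delta>))" if x: "x \<in> perp n B" for x
  proof -
    have "finite x"
      using x finite_subset[OF _ finite_atLeastLessThan] by (auto simp: perp_def)
    then have "(-1::complex) ^ card (sdiff x w \<inter> \<beta>) = (-1) ^ card (x \<inter> \<beta>) * c"
      using signs[OF empty_perp] minus_one_power_card_sdiff_Int[OF _ fin(3), of x \<beta>] unfolding w_def
      by (metis Int_empty_left card.empty mult_1_right power_0 sdiff_empty(2))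
    then have "(-1::complex) ^ card (x \<inter> \<beta>) = (-1) ^ card (x \<inter> \<delta>)"
      using signs[OF x] \<open>c \<noteq> 0\<close> by (metis mult.commute mult_cancel_left)
    then show ?thesis
      using even_card_sdiff_Int[OF fin(1,2), of x] by (simp add: minus_one_power_iff split: if_splits)
  qed
  then have "sdiff \<beta> \<delta> \<in> perp n (perp n B)"
    unfolding perp_def[of n "perp n B"] using sdiff_subsetI[OF sub(2,4)] by (auto simp: inf_commute)
  then show "sdiff \<beta> \<delta> \<in> B"
    using perp_perp[OF subspace_B] by simp
qed

lemma circuit_conj_pauli_in_stabilizer:
  assumes "one_local_clifford n g" "logical_operator n A B (circuit n g)"
    and rel: "\<And>\<chi>. \<chi> \<in> Q \<Longrightarrow> circuit n g (F \<chi>) = Xop \<gamma> (Zop \<delta> (circuit n g \<chi>))"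
    and conj: "\<And>\<chi>. \<chi> \<in> Q \<Longrightarrow> circuit n g (F \<chi>) = (\<lambda>x. \<kappa> * Xop \<alpha> (Zop \<beta> (circuit n g \<chi>)) x)"
    and "\<kappa> \<noteq> 0"
    and sub: "\<alpha> \<subseteq> {0..<n}" "\<beta> \<subseteq> {0..<n}" "\<gamma> \<subseteq> {0..<n}" "\<delta> \<subseteq> {0..<n}"
  shows "sdiff \<alpha> \<gamma> \<in> A \<and> sdiff \<beta> \<delta> \<in> B"
proof (rule pauli_agree_on_cosets[OF sub, where c = "1 / \<kappa>"])
  fix x
  assume "x \<in> perp n B"
  then obtain \<chi> where "\<chi> \<in> Q" "circuit n g \<chi> = coset_state A x"
    using circuit_onto_codespace[OF assms(1,2) coset_state_in_codespace] by blast
  then have "Xop \<gamma> (Zop \<delta> (coset_state A x)) = (\<lambda>y. \<kappa> * Xop \<alpha> (Zop \<beta> (coset_state A x)) y)"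
    using rel conj by metis
  then show "Xop \<alpha> (Zop \<beta> (coset_state A x)) = (\<lambda>y. 1 / \<kappa> * Xop \<gamma> (Zop \<delta> (coset_state A x)) y)"
    using \<open>\<kappa> \<noteq> 0\<close> by simp
qed

end

section \<open>Propagating Pauli operators through a logical 1-local Clifford circuit\<close>

lemma one_local_clifford_conj_pauli:
  assumes "one_local_clifford n g" "P \<in> {1, 3}"
  obtains c p where
    "\<And>i. i < n \<Longrightarrow> c i \<noteq> 0 \<and> p i \<in> {1, 2, 3} \<and> conj1 (g i) (pauli1 P) = (\<lambda>a b. c i * pauli1 (p i) a b)"
proof -
  have "\<forall>i. \<exists>cp. i < n \<longrightarrow>
      fst cp \<noteq> 0 \<and> snd cp \<in> {1, 2, 3} \<and> conj1 (g i) (pauli1 P) = (\<lambda>a b. fst cp * pauli1 (snd cp) a b)"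
  proof
    fix i
    show "\<exists>cp. i < n \<longrightarrow>
      fst cp \<noteq> 0 \<and> snd cp \<in> {1, 2, 3} \<and> conj1 (g i) (pauli1 P) = (\<lambda>a b. fst cp * pauli1 (snd cp) a b)"
    proof (cases "i < n")
      case True
      then have "clifford1 (g i)"
        using assms(1) by (simp add: one_local_clifford_def)
      then obtain c p where "c \<noteq> 0" "p \<in> {1, 2, 3}" "conj1 (g i) (pauli1 P) = (\<lambda>a b. c * pauli1 p a b)"
        using assms(2) by (rule clifford1_conj_pauli)
      then show ?thesis
        by (intro exI[of _ "(c, p)"]) simp
    qed simp
  qed
  then obtain f where "\<And>i. i < n \<Longrightarrow> fst (f i) \<noteq> 0 \<and> snd (f i) \<in> {1, 2, 3} \<and>
      conj1 (g i) (pauli1 P) = (\<lambda>a b. fst (f i) * pauli1 (snd (f i)) a b)"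
    by (metis choice)
  then show ?thesis
    by (rule that[of "\<lambda>i. fst (f i)" "\<lambda>i. snd (f i)"])
qed

locale clifford_frame = css_with_logicals +
  fixes g :: "nat \<Rightarrow> gate1" and cx cz :: "nat \<Rightarrow> complex" and px pz :: "nat \<Rightarrow> nat"
  assumes clifford: "one_local_clifford n g"
    and logical: "logical_operator n A B (circuit n g)"
    and conj_X: "\<And>i. i < n \<Longrightarrow>
      cx i \<noteq> 0 \<and> px i \<in> {1, 2, 3} \<and> conj1 (g i) (pauli1 1) = (\<lambda>a b. cx i * pauli1 (px i) a b)"
    and conj_Z: "\<And>i. i < n \<Longrightarrow>
      cz i \<noteq> 0 \<and> pz i \<in> {1, 2, 3} \<and> conj1 (g i) (pauli1 3) = (\<lambda>a b. cz i * pauli1 (pz i) a b)"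
begin

abbreviation "C \<equiv> circuit n g"

lemma unitary_g: "i < n \<Longrightarrow> unitary1 (g i)"
  using clifford by (simp add: one_local_clifford_def clifford1_def)

lemma px_pz_cases: "i < n \<Longrightarrow>
    (px i = 1 \<or> px i = 2 \<or> px i = 3) \<and> (pz i = 1 \<or> pz i = 2 \<or> pz i = 3) \<and> px i \<noteq> pz i"
proof -
  assume i: "i < n"
  have "px i \<noteq> pz i"
    by (rule conj1_pauli_X_Z_distinct[OF unitary_g[OF i], where c = "cx i" and c' = "cz i"])
      (use conj_X[OF i] conj_Z[OF i] in simp_all)
  then show ?thesis
    using conj_X[OF i] conj_Z[OF i] by simp
qed

lemma circuit_Xop_conj:
  assumes "a \<subseteq> {0..<n}"
  obtains \<kappa> where "\<kappa> \<noteq> 0"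
    "\<And>\<psi>. \<psi> \<in> states n \<Longrightarrow> C (Xop a \<psi>) = (\<lambda>x. \<kappa> * Xop (x_support px a) (Zop (z_support px a) (C \<psi>)) x)"
proof -
  have conj_P: "\<And>i. i < n \<Longrightarrow> conj1 (g i) (pauli1 1) = (\<lambda>a b. cx i * pauli1 (px i) a b)"
    and nonzero: "\<And>i. i < n \<Longrightarrow> cx i \<noteq> 0"
    using conj_X by simp_all
  obtain \<kappa> where "\<kappa> \<noteq> 0" and conj: "\<And>\<psi>. \<psi> \<in> states n \<Longrightarrow> C (circuit n (pauli_gates 1 a) \<psi>) =
      (\<lambda>x. \<kappa> * Xop (x_support px a) (Zop (z_support px a) (C \<psi>)) x)"
    using circuit_pauli_gates_commute[where g = g, OF unitary_g conj_P nonzero assms] by blast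
  show ?thesis
  proof (rule that[OF \<open>\<kappa> \<noteq> 0\<close>])
    fix \<psi>
    assume "\<psi> \<in> states n"
    then show "C (Xop a \<psi>) = (\<lambda>x. \<kappa> * Xop (x_support px a) (Zop (z_support px a) (C \<psi>)) x)"
      unfolding Xop_eq_circuit[OF \<open>\<psi> \<in> states n\<close> assms] by (rule conj)
  qed
qed

lemma circuit_Zop_conj:
  assumes "b \<subseteq> {0..<n}"
  obtains \<kappa> where "\<kappa> \<noteq> 0"
    "\<And>\<psi>. \<psi> \<in> states n \<Longrightarrow> C (Zop b \<psi>) = (\<lambda>x. \<kappa> * Xop (x_support pz b) (Zop (z_support pz b) (C \<psi>)) x)"
proof -
  have conj_P: "\<And>i. i < n \<Longrightarrow> conj1 (g i) (pauli1 3) = (\<lambda>a b. cz i * pauli1 (pz i) a b)"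
    and nonzero: "\<And>i. i < n \<Longrightarrow> cz i \<noteq> 0"
    using conj_Z by simp_all
  obtain \<kappa> where "\<kappa> \<noteq> 0" and conj: "\<And>\<psi>. \<psi> \<in> states n \<Longrightarrow> C (circuit n (pauli_gates 3 b) \<psi>) =
      (\<lambda>x. \<kappa> * Xop (x_support pz b) (Zop (z_support pz b) (C \<psi>)) x)"
    using circuit_pauli_gates_commute[where g = g, OF unitary_g conj_P nonzero assms] by blast
  show ?thesis
  proof (rule that[OF \<open>\<kappa> \<noteq> 0\<close>])
    fix \<psi>
    assume "\<psi> \<in> states n"
    then show "C (Zop b \<psi>) = (\<lambda>x. \<kappa> * Xop (x_support pz b) (Zop (z_support pz b) (C \<psi>)) x)"
      unfolding Zop_eq_circuit[OF \<open>\<psi> \<in> states n\<close> assms] by (rule conj)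
  qed
qed

lemma Xop_relation_mod_stabilizers:
  assumes a: "a \<subseteq> {0..<n}" and "\<gamma> \<subseteq> {0..<n}" "\<delta> \<subseteq> {0..<n}"
    and rel: "\<And>\<chi>. \<chi> \<in> Q \<Longrightarrow> C (Xop a \<chi>) = Xop \<gamma> (Zop \<delta> (C \<chi>))"
  shows "sdiff (x_support px a) \<gamma> \<in> A \<and> sdiff (z_support px a) \<delta> \<in> B"
proof -
  obtain \<kappa> where "\<kappa> \<noteq> 0" and conj:
    "\<And>\<psi>. \<psi> \<in> states n \<Longrightarrow> C (Xop a \<psi>) = (\<lambda>x. \<kappa> * Xop (x_support px a) (Zop (z_support px a) (C \<psi>)) x)"
    using circuit_Xop_conj[OF a] by blast
  show ?thesis
  proof (rule circuit_conj_pauli_in_stabilizer[OF clifford logical rel _ \<open>\<kappa> \<noteq> 0\<close>])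
    show "\<And>\<chi>. \<chi> \<in> Q \<Longrightarrow> C (Xop a \<chi>) = (\<lambda>x. \<kappa> * Xop (x_support px a) (Zop (z_support px a) (C \<chi>)) x)"
      using conj by (simp add: codespace_def)
  qed (use assms x_support_subset z_support_subset in blast)+
qed

lemma Zop_relation_mod_stabilizers:
  assumes b: "b \<subseteq> {0..<n}" and "\<gamma> \<subseteq> {0..<n}" "\<delta> \<subseteq> {0..<n}"
    and rel: "\<And>\<chi>. \<chi> \<in> Q \<Longrightarrow> C (Zop b \<chi>) = Xop \<gamma> (Zop \<delta> (C \<chi>))"
  shows "sdiff (x_support pz b) \<gamma> \<in> A \<and> sdiff (z_support pz b) \<delta> \<in> B"
proof -
  obtain \<kappa> where "\<kappa> \<noteq> 0" and conj:
    "\<And>\<psi>. \<psi> \<in> states n \<Longrightarrow> C (Zop b \<psi>) = (\<lambda>x. \<kappa> * Xop (x_support pz b) (Zop (z_support pz b) (C \<psi>)) x)"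
    using circuit_Zop_conj[OF b] by blast
  show ?thesis
  proof (rule circuit_conj_pauli_in_stabilizer[OF clifford logical rel _ \<open>\<kappa> \<noteq> 0\<close>])
    show "\<And>\<chi>. \<chi> \<in> Q \<Longrightarrow> C (Zop b \<chi>) = (\<lambda>x. \<kappa> * Xop (x_support pz b) (Zop (z_support pz b) (C \<chi>)) x)"
      using conj by (simp add: codespace_def)
  qed (use assms x_support_subset z_support_subset in blast)+
qed

lemma stabilizer_X_image: "a \<in> A \<Longrightarrow> x_support px a \<in> A \<and> z_support px a \<in> B"
  using Xop_relation_mod_stabilizers[of a "{}" "{}"] f2_subspace_subset[OF subspace_A] by (auto simp: codespace_def)

lemma stabilizer_Z_image: "b \<in> B \<Longrightarrow> x_support pz b \<in> A \<and> z_support pz b \<in> B"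
  using Zop_relation_mod_stabilizers[of b "{}" "{}"] f2_subspace_subset[OF subspace_B] by (auto simp: codespace_def)

definition aligned_qubits :: "nat set" where
  "aligned_qubits = {i. i < n \<and> px i \<in> {1, 2} \<and> pz i \<in> {2, 3}}"

text \<open>On every qubit the images of \<open>X\<close> and \<open>Z\<close> are distinct, so intersecting with the aligned
  qubits can be expressed by images of stabilizers.\<close>

lemma Int_aligned_qubits_in_A: "a \<in> A \<Longrightarrow> a \<inter> aligned_qubits \<in> A"
proof -
  assume a: "a \<in> A"
  have "a \<inter> aligned_qubits = sdiff (x_support px a) (x_support px (x_support pz (z_support px a)))"
  proof (rule set_eqI)
    fix i
    show "i \<in> a \<inter> aligned_qubits \<longleftrightarrow> i \<in> sdiff (x_support px a) (x_support px (x_support pz (z_support px a)))"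
    proof (cases "i < n")
      case True
      then show ?thesis
        using px_pz_cases[OF True] by (elim conjE disjE) (simp_all add: aligned_qubits_def x_support_def z_support_def)
    next
      case False
      then have "i \<notin> a"
        using f2_subspace_subset[OF subspace_A a] by auto
      then show ?thesis
        by (simp add: x_support_def z_support_def)
    qed
  qed
  moreover have "x_support px (x_support pz (z_support px a)) \<in> A"
    using stabilizer_X_image stabilizer_Z_image a by blast
  ultimately show ?thesis
    using f2_subspace_sdiff[OF subspace_A] stabilizer_X_image[OF a] by simp
qed

lemma Int_aligned_qubits_in_B: "b \<in> B \<Longrightarrow> b \<inter> aligned_qubits \<in> B"
proof -
  assume b: "b \<in> B"
  have "b \<inter> aligned_qubits = sdiff (z_support pz b) (z_support pz (z_support px (x_support pz b)))"
  proof (rule set_eqI)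
    fix i
    show "i \<in> b \<inter> aligned_qubits \<longleftrightarrow> i \<in> sdiff (z_support pz b) (z_support pz (z_support px (x_support pz b)))"
    proof (cases "i < n")
      case True
      then show ?thesis
        using px_pz_cases[OF True] by (elim conjE disjE) (simp_all add: aligned_qubits_def x_support_def z_support_def)
    next
      case False
      then have "i \<notin> b"
        using f2_subspace_subset[OF subspace_B b] by auto
      then show ?thesis
        by (simp add: x_support_def z_support_def)
    qed
  qed
  moreover have "z_support pz (z_support px (x_support pz b)) \<in> B"
    using stabilizer_X_image stabilizer_Z_image b by blast
  ultimately show ?thesis
    using f2_subspace_sdiff[OF subspace_B] stabilizer_Z_image[OF b] by simp
qed

lemma aligned_qubits_trivial:
  assumes "non_splitting n A B"
  shows "aligned_qubits = {} \<or> aligned_qubits = {0..<n}"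
proof -
  have "code_splits n A B aligned_qubits"
    unfolding code_splits_def using Int_aligned_qubits_in_A Int_aligned_qubits_in_B
    by (blast intro: subspace_splits_if_Int_closed subspace_A subspace_B)
  moreover have "aligned_qubits \<subseteq> {0..<n}"
    by (auto simp: aligned_qubits_def)
  ultimately show ?thesis
    using assms unfolding non_splitting_def by blast
qed

lemma aligned_qubits_nonempty:
  assumes act: "has_logical_action n A B u v C W" and l: "l < k"
    and shift: "\<And>m m'. m \<subseteq> {0..<k} \<Longrightarrow> m' \<subseteq> {0..<k} \<Longrightarrow> W m' (sdiff m {l}) = W (sdiff m' {l}) m"
    and diag: "\<And>m m'. m \<subseteq> {0..<k} \<Longrightarrow> m' \<subseteq> {0..<k} \<Longrightarrow> W m' m \<noteq> 0 \<Longrightarrow> (l \<in> m') = (l \<in> m)"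
  shows "aligned_qubits \<noteq> {}"
proof
  assume none: "aligned_qubits = {}"
  have "(px i = 2 \<or> px i = 3) \<and> (pz i = 1 \<or> pz i = 2)" if "i < n" for i
    using px_pz_cases[OF that] none that unfolding aligned_qubits_def by auto
  then have "\<forall>i\<in>u l. px i = 2 \<or> px i = 3" "\<forall>i\<in>v l. pz i = 1 \<or> pz i = 2"
    using u_subset[OF l] v_subset[OF l] by fastforce+
  then have supports: "z_support px (u l) = u l" "x_support pz (v l) = v l"
    by (auto simp: x_support_def z_support_def)
  have "C (Xop (u l) \<chi>) = Xop (u l) (Zop {} (C \<chi>))" if "\<chi> \<in> Q" for \<chi>
    using intertwine_logical_action[OF act sum_linear_circuit sum_linear_Xop[of "u l"] _ sum_linear_Xop[of "u l"]
        _ _ _ _ that, where s = "\<lambda>_. 1" and s' = "\<lambda>_. 1" and D = "{l}" and D' = "{l}"] l shift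
    by (simp add: Xop_logical_basis)
  then have "u l \<in> B"
    using Xop_relation_mod_stabilizers[OF u_subset[OF l] u_subset[OF l], of "{}"] supports by simp
  have "C (Zop (v l) \<chi>) = Xop {} (Zop (v l) (C \<chi>))" if "\<chi> \<in> Q" for \<chi>
    using intertwine_logical_action[OF act sum_linear_circuit sum_linear_Zop[of "v l"] _ sum_linear_Zop[of "v l"]
        _ _ _ _ that,
        where s = "\<lambda>m. if l \<in> m then -1 else 1" and s' = "\<lambda>m. if l \<in> m then -1 else 1" and D = "{}" and D' = "{}"]
      diag
    by (fastforce simp: Zop_logical_basis[OF l])
  then have "v l \<in> A"
    using Zop_relation_mod_stabilizers[OF v_subset[OF l] _ v_subset[OF l], of "{}"] supports by simp
  show False
    using even_A_B[OF \<open>v l \<in> A\<close> \<open>u l \<in> B\<close>] odd_v_u_iff[OF l l] by simp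
qed

lemma supports_if_all_aligned:
  assumes "aligned_qubits = {0..<n}"
  shows "a \<subseteq> {0..<n} \<Longrightarrow> x_support px a = a" and "b \<subseteq> {0..<n} \<Longrightarrow> z_support pz b = b"
proof -
  have "i \<in> aligned_qubits" if "i < n" for i
    using assms that by simp
  then have "(px i = 1 \<or> px i = 2) \<and> (pz i = 2 \<or> pz i = 3)" if "i < n" for i
    using that by (simp add: aligned_qubits_def)
  then show "a \<subseteq> {0..<n} \<Longrightarrow> x_support px a = a" and "b \<subseteq> {0..<n} \<Longrightarrow> z_support pz b = b"
    unfolding x_support_def z_support_def by fastforce+
qed

text \<open>The hypotheses on \<open>W\<close> below are the entrywise forms of \<open>W X\<^sub>j = Z\<^sub>j W\<close>,
  \<open>X\<^sub>j W = W Z\<^sub>j\<close> and \<open>W X\<^sub>c = X\<^sub>c X\<^sub>t W\<close>.\<close>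

lemma not_X_to_Z:
  assumes aligned: "aligned_qubits = {0..<n}" and act: "has_logical_action n A B u v C W" and j: "j < k"
    and W: "\<And>m m'. m \<subseteq> {0..<k} \<Longrightarrow> m' \<subseteq> {0..<k} \<Longrightarrow>
      W m' (sdiff m {j}) = (if j \<in> m' then -1 else 1) * W m' m"
  shows False
proof -
  have "C (Xop (u j) \<chi>) = Xop {} (Zop (v j) (C \<chi>))" if "\<chi> \<in> Q" for \<chi>
    using intertwine_logical_action[OF act sum_linear_circuit sum_linear_Xop[of "u j"] _ sum_linear_Zop[of "v j"]
        _ _ _ _ that, where s = "\<lambda>_. 1" and s' = "\<lambda>m. if j \<in> m then -1 else 1" and D = "{j}" and D' = "{}"] j W
    by (simp add: Xop_logical_basis Zop_logical_basis)
  from Xop_relation_mod_stabilizers[OF u_subset[OF j] empty_subsetI v_subset[OF j] this] have "u j \<in> A"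
    using supports_if_all_aligned(1)[OF aligned u_subset[OF j]] by simp
  then show False
    using u_notin_A[OF j] by simp
qed

lemma not_Z_to_X:
  assumes aligned: "aligned_qubits = {0..<n}" and act: "has_logical_action n A B u v C W" and j: "j < k"
    and W: "\<And>m m'. m \<subseteq> {0..<k} \<Longrightarrow> m' \<subseteq> {0..<k} \<Longrightarrow>
      W (sdiff m' {j}) m = (if j \<in> m then -1 else 1) * W m' m"
  shows False
proof -
  have "C (Zop (v j) \<chi>) = Xop (u j) (Zop {} (C \<chi>))" if "\<chi> \<in> Q" for \<chi>
    using intertwine_logical_action[OF act sum_linear_circuit sum_linear_Zop[of "v j"] _ sum_linear_Xop[of "u j"]
        _ _ _ _ that, where s = "\<lambda>m. if j \<in> m then -1 else 1" and s' = "\<lambda>_. 1" and D = "{}" and D' = "{j}"] j W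
    by (simp add: Xop_logical_basis Zop_logical_basis)
  from Zop_relation_mod_stabilizers[OF v_subset[OF j] u_subset[OF j] empty_subsetI this] have "v j \<in> B"
    using supports_if_all_aligned(2)[OF aligned v_subset[OF j]] by simp
  then show False
    using v_notin_B[OF j] by simp
qed

lemma not_X_to_XX:
  assumes aligned: "aligned_qubits = {0..<n}" and act: "has_logical_action n A B u v C W"
    and c: "c < k" and t: "t < k"
    and W: "\<And>m m'. m \<subseteq> {0..<k} \<Longrightarrow> m' \<subseteq> {0..<k} \<Longrightarrow> W m' (sdiff m {c}) = W (sdiff (sdiff m' {c}) {t}) m"
  shows False
proof -
  have ct: "f2_sum u (sdiff {c} {t}) k = sdiff (u c) (u t)"
    using c t by (simp add: f2_sum_sdiff f2_sum_singleton)
  have "sdiff m' (sdiff {c} {t}) = sdiff (sdiff m' {c}) {t}" for m'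
    by auto
  moreover have "sdiff {c} {t} \<subseteq> {0..<k}"
    using c t by (intro sdiff_subsetI) auto
  ultimately have "C (Xop (u c) \<chi>) = Xop (f2_sum u (sdiff {c} {t}) k) (Zop {} (C \<chi>))" if "\<chi> \<in> Q" for \<chi>
    using intertwine_logical_action[OF act sum_linear_circuit sum_linear_Xop[of "u c"] _
        sum_linear_Xop[of "f2_sum u (sdiff {c} {t}) k"] _ _ _ _ that,
        where s = "\<lambda>_. 1" and s' = "\<lambda>_. 1" and D = "{c}" and D' = "sdiff {c} {t}"] c t W
    by (simp add: Xop_logical_basis Xop_f2_sum_logical_basis)
  from Xop_relation_mod_stabilizers[OF u_subset[OF c] _ empty_subsetI this] have "sdiff (u c) (sdiff (u c) (u t)) \<in> A"
    using supports_if_all_aligned(1)[OF aligned u_subset[OF c]] u_subset[OF c] u_subset[OF t]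
    by (simp add: ct sdiff_subsetI)
  then show False
    using u_notin_A[OF t] by simp
qed

end

section \<open>Operators acting on disjoint tuples of logical qubits\<close>

lemma tuple_pos_sdiff_disjoint: "set t \<inter> D = {} \<Longrightarrow> tuple_pos t (sdiff y D) = tuple_pos t y"
  unfolding tuple_pos_def by (auto dest: nth_mem)

lemma tuple_pos_sdiff_nth:
  assumes "distinct t" "i < length t"
  shows "tuple_pos t (sdiff y {t ! i}) = sdiff (tuple_pos t y) {i}"
  unfolding tuple_pos_def using assms by (auto simp: nth_eq_iff_index_eq)

lemma zero_in_tuple_pos_iff: "0 < length t \<Longrightarrow> 0 \<in> tuple_pos t y \<longleftrightarrow> t ! 0 \<in> y"
  unfolding tuple_pos_def by auto

lemma on_tuples_untouched_shift:
  assumes "l \<notin> \<Union>(set ` I)"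
  shows "on_tuples I U m' (sdiff m {l}) = on_tuples I U (sdiff m' {l}) m"
proof -
  have "tuple_pos t (sdiff y {l}) = tuple_pos t y" if "t \<in> I" for t y
    using assms that by (intro tuple_pos_sdiff_disjoint) auto
  moreover have "m' - \<Union>(set ` I) = sdiff m {l} - \<Union>(set ` I) \<longleftrightarrow> sdiff m' {l} - \<Union>(set ` I) = m - \<Union>(set ` I)"
    using assms by (auto simp: set_eq_iff)
  ultimately show ?thesis
    unfolding on_tuples_def by simp
qed

lemma on_tuples_untouched_diag:
  assumes "l \<notin> \<Union>(set ` I)" "on_tuples I U m' m \<noteq> 0"
  shows "l \<in> m' \<longleftrightarrow> l \<in> m"
  using assms unfolding on_tuples_def by (auto split: if_splits)

text \<open>Flipping qubits of one tuple \<open>t0\<close> only affects the factor of \<open>on_tuples\<close> belonging to \<open>t0\<close>.\<close>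

lemma on_tuples_local:
  assumes I: "finite I" "t0 \<in> I" "\<forall>t\<in>I. \<forall>t'\<in>I. t \<noteq> t' \<longrightarrow> set t \<inter> set t' = {}"
    and sub: "D \<subseteq> set t0" "E \<subseteq> set t0" "D' \<subseteq> set t0" "E' \<subseteq> set t0"
    and U: "U (tuple_pos t0 (sdiff x D)) (tuple_pos t0 (sdiff y E)) =
      c * U (tuple_pos t0 (sdiff x D')) (tuple_pos t0 (sdiff y E'))"
  shows "on_tuples I U (sdiff x D) (sdiff y E) = c * on_tuples I U (sdiff x D') (sdiff y E')"
proof -
  let ?J = "\<Union>(set ` I)"
  define R where "R x y = (\<Prod>t\<in>I - {t0}. U (tuple_pos t x) (tuple_pos t y)) *
    (if x - ?J = y - ?J then 1 else 0)" for x y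
  have split: "on_tuples I U x y = U (tuple_pos t0 x) (tuple_pos t0 y) * R x y" for x y
    unfolding on_tuples_def R_def using prod.remove[OF I(1,2), of "\<lambda>t. U (tuple_pos t x) (tuple_pos t y)"]
    by (simp add: mult.assoc)
  have R: "R (sdiff x D) (sdiff y E) = R x y" if "D \<subseteq> set t0" "E \<subseteq> set t0" for x y D E
  proof -
    have "tuple_pos t (sdiff x D) = tuple_pos t x" "tuple_pos t (sdiff y E) = tuple_pos t y" if "t \<in> I - {t0}" for t
    proof -
      have "set t \<inter> set t0 = {}"
        using I(2,3) that by blast
      then have "set t \<inter> D = {}" "set t \<inter> E = {}"
        using \<open>D \<subseteq> set t0\<close> \<open>E \<subseteq> set t0\<close> by blast+
      then show "tuple_pos t (sdiff x D) = tuple_pos t x" "tuple_pos t (sdiff y E) = tuple_pos t y"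
        by (simp_all add: tuple_pos_sdiff_disjoint)
    qed
    moreover have "sdiff x D - ?J = x - ?J" "sdiff y E - ?J = y - ?J"
      using that I(2) by auto
    ultimately show ?thesis
      unfolding R_def by simp
  qed
  show ?thesis
    unfolding split R[OF sub(1,2)] R[OF sub(3,4)] U by simp
qed

lemma on_tuples_X_to_Z:
  assumes I: "finite I" "t0 \<in> I" "\<forall>t\<in>I. \<forall>t'\<in>I. t \<noteq> t' \<longrightarrow> set t \<inter> set t' = {}"
    and t0: "distinct t0" "0 < length t0"
    and U: "\<And>w w'. U w' (sdiff w {0}) = (if 0 \<in> w' then -1 else 1) * U w' w"
  shows "on_tuples I U m' (sdiff m {t0 ! 0}) = (if t0 ! 0 \<in> m' then -1 else 1) * on_tuples I U m' m"
  using on_tuples_local[OF I, of "{}" "{t0 ! 0}" "{}" "{}"] t0 U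
  by (simp add: tuple_pos_sdiff_nth zero_in_tuple_pos_iff)

lemma on_tuples_Z_to_X:
  assumes I: "finite I" "t0 \<in> I" "\<forall>t\<in>I. \<forall>t'\<in>I. t \<noteq> t' \<longrightarrow> set t \<inter> set t' = {}"
    and t0: "distinct t0" "0 < length t0"
    and U: "\<And>w w'. U (sdiff w' {0}) w = (if 0 \<in> w then -1 else 1) * U w' w"
  shows "on_tuples I U (sdiff m' {t0 ! 0}) m = (if t0 ! 0 \<in> m then -1 else 1) * on_tuples I U m' m"
  using on_tuples_local[OF I, of "{t0 ! 0}" "{}" "{}" "{}"] t0 U
  by (simp add: tuple_pos_sdiff_nth zero_in_tuple_pos_iff)

lemma on_tuples_X_to_XX:
  assumes I: "finite I" "t0 \<in> I" "\<forall>t\<in>I. \<forall>t'\<in>I. t \<noteq> t' \<longrightarrow> set t \<inter> set t' = {}"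
    and t0: "distinct t0" "1 < length t0"
    and U: "\<And>w w'. U w' (sdiff w {0}) = U (sdiff (sdiff w' {0}) {1}) w"
  shows "on_tuples I U m' (sdiff m {t0 ! 0}) = on_tuples I U (sdiff (sdiff m' {t0 ! 0}) {t0 ! 1}) m"
proof -
  have tp0: "tuple_pos t0 (sdiff y {t0 ! 0}) = sdiff (tuple_pos t0 y) {0}"
    and tp1: "tuple_pos t0 (sdiff y {t0 ! 1}) = sdiff (tuple_pos t0 y) {1}" for y
    using t0 by (auto intro!: tuple_pos_sdiff_nth)
  have D': "sdiff (sdiff m' {t0 ! 0}) {t0 ! 1} = sdiff m' (sdiff {t0 ! 0} {t0 ! 1})"
    by auto
  have "U (tuple_pos t0 (sdiff m' {})) (tuple_pos t0 (sdiff m {t0 ! 0})) =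
      1 * U (tuple_pos t0 (sdiff m' (sdiff {t0 ! 0} {t0 ! 1}))) (tuple_pos t0 (sdiff m {}))"
    unfolding D'[symmetric] tp0 tp1 sdiff_empty mult_1 by (rule U)
  moreover have "{} \<subseteq> set t0" "{t0 ! 0} \<subseteq> set t0" "sdiff {t0 ! 0} {t0 ! 1} \<subseteq> set t0"
    using t0 by (auto intro!: nth_mem)
  ultimately have "on_tuples I U (sdiff m' {}) (sdiff m {t0 ! 0}) =
      1 * on_tuples I U (sdiff m' (sdiff {t0 ! 0} {t0 ! 1})) (sdiff m {})"
    by (metis on_tuples_local[OF I])
  then show ?thesis
    unfolding D' by simp
qed

context css_with_logicals
begin

text \<open>A partially addressing 1-local Clifford circuit leaves some logical qubit untouched; on the
  code level it therefore commutes with that qubit's logical \<open>X\<close> and \<open>Z\<close>, which forces every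
  physical qubit to be aligned.\<close>

lemma partially_addressable_aligned:
  assumes ns: "non_splitting n A B" and pa: "partially_addressable n A B u v p U"
  obtains g cx cz px pz I t0 where "clifford_frame n A B u v g cx cz px pz"
    "clifford_frame.aligned_qubits n px pz = {0..<n}"
    "has_logical_action n A B u v (circuit n g) (on_tuples I U)"
    "finite I" "t0 \<in> I" "\<forall>t\<in>I. \<forall>t'\<in>I. t \<noteq> t' \<longrightarrow> set t \<inter> set t' = {}"
    "distinct t0" "length t0 = p" "set t0 \<subseteq> {0..<k}"
proof -
  obtain I g where I: "I \<noteq> {}" "\<forall>t\<in>I. length t = p \<and> distinct t \<and> set t \<subseteq> {0..<k}"
      "\<forall>t\<in>I. \<forall>t'\<in>I. t \<noteq> t' \<longrightarrow> set t \<inter> set t' = {}" "\<Union>(set ` I) \<noteq> {0..<k}"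
    and clifford: "one_local_clifford n g" and logical: "logical_operator n A B (circuit n g)"
    and act: "has_logical_action n A B u v (circuit n g) (on_tuples I U)"
    using pa unfolding partially_addressable_def Let_def by (elim exE conjE)
  have "I \<subseteq> {t. set t \<subseteq> {0..<k} \<and> length t = p}"
    using I(2) by auto
  then have "finite I"
    by (rule finite_subset) (simp add: finite_lists_length_eq)
  have "\<Union>(set ` I) \<subseteq> {0..<k}"
    using I(2) by auto
  then obtain l where l: "l < k" "l \<notin> \<Union>(set ` I)"
    using I(4) by fastforce
  obtain cx px where X: "\<And>i. i < n \<Longrightarrow>
      cx i \<noteq> 0 \<and> px i \<in> {1, 2, 3} \<and> conj1 (g i) (pauli1 1) = (\<lambda>a b. cx i * pauli1 (px i) a b)"
    using one_local_clifford_conj_pauli[OF clifford, of 1] by auto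
  obtain cz pz where Z: "\<And>i. i < n \<Longrightarrow>
      cz i \<noteq> 0 \<and> pz i \<in> {1, 2, 3} \<and> conj1 (g i) (pauli1 3) = (\<lambda>a b. cz i * pauli1 (pz i) a b)"
    using one_local_clifford_conj_pauli[OF clifford, of 3] by auto
  interpret frame: clifford_frame n A B u v g cx cz px pz
    using css logicals clifford logical X Z by unfold_locales auto
  have "frame.aligned_qubits \<noteq> {}"
    using frame.aligned_qubits_nonempty[OF act l(1)] on_tuples_untouched_shift[OF l(2)]
      on_tuples_untouched_diag[OF l(2)] by blast
  then have "frame.aligned_qubits = {0..<n}"
    using frame.aligned_qubits_trivial[OF ns] by blast
  moreover obtain t0 where "t0 \<in> I"
    using I(1) by blast
  ultimately show ?thesis
    using that frame.clifford_frame_axioms act \<open>finite I\<close> I(2,3) by blast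
qed

lemma not_partially_addressable_X_to_Z:
  assumes ns: "non_splitting n A B" and "0 < p"
    and U: "\<And>w w'. U w' (sdiff w {0}) = (if 0 \<in> w' then -1 else 1) * U w' w"
  shows "\<not> partially_addressable n A B u v p U"
proof
  assume "partially_addressable n A B u v p U"
  then obtain g cx cz px pz I t0 where "clifford_frame n A B u v g cx cz px pz"
    and aligned: "clifford_frame.aligned_qubits n px pz = {0..<n}"
    and act: "has_logical_action n A B u v (circuit n g) (on_tuples I U)"
    and I: "finite I" "t0 \<in> I" "\<forall>t\<in>I. \<forall>t'\<in>I. t \<noteq> t' \<longrightarrow> set t \<inter> set t' = {}"
    and t0: "distinct t0" "length t0 = p" "set t0 \<subseteq> {0..<k}"
    by (rule partially_addressable_aligned[OF ns])
  then interpret clifford_frame n A B u v g cx cz px pz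
    by simp
  have "t0 ! 0 < k"
    using t0 \<open>0 < p\<close> by (metis atLeastLessThan_iff nth_mem subsetD)
  then show False
    using not_X_to_Z[OF aligned act] on_tuples_X_to_Z[where U = U, OF I t0(1) _ U] t0(2) \<open>0 < p\<close> by blast
qed

lemma not_partially_addressable_Z_to_X:
  assumes ns: "non_splitting n A B" and "0 < p"
    and U: "\<And>w w'. U (sdiff w' {0}) w = (if 0 \<in> w then -1 else 1) * U w' w"
  shows "\<not> partially_addressable n A B u v p U"
proof
  assume "partially_addressable n A B u v p U"
  then obtain g cx cz px pz I t0 where "clifford_frame n A B u v g cx cz px pz"
    and aligned: "clifford_frame.aligned_qubits n px pz = {0..<n}"
    and act: "has_logical_action n A B u v (circuit n g) (on_tuples I U)"
    and I: "finite I" "t0 \<in> I" "\<forall>t\<in>I. \<forall>t'\<in>I. t \<noteq> t' \<longrightarrow> set t \<inter> set t' = {}"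
    and t0: "distinct t0" "length t0 = p" "set t0 \<subseteq> {0..<k}"
    by (rule partially_addressable_aligned[OF ns])
  then interpret clifford_frame n A B u v g cx cz px pz
    by simp
  have "t0 ! 0 < k"
    using t0 \<open>0 < p\<close> by (metis atLeastLessThan_iff nth_mem subsetD)
  then show False
    using not_Z_to_X[OF aligned act] on_tuples_Z_to_X[where U = U, OF I t0(1) _ U] t0(2) \<open>0 < p\<close> by blast
qed

lemma not_partially_addressable_X_to_XX:
  assumes ns: "non_splitting n A B" and "1 < p"
    and U: "\<And>w w'. U w' (sdiff w {0}) = U (sdiff (sdiff w' {0}) {1}) w"
  shows "\<not> partially_addressable n A B u v p U"
proof
  assume "partially_addressable n A B u v p U"
  then obtain g cx cz px pz I t0 where "clifford_frame n A B u v g cx cz px pz"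
    and aligned: "clifford_frame.aligned_qubits n px pz = {0..<n}"
    and act: "has_logical_action n A B u v (circuit n g) (on_tuples I U)"
    and I: "finite I" "t0 \<in> I" "\<forall>t\<in>I. \<forall>t'\<in>I. t \<noteq> t' \<longrightarrow> set t \<inter> set t' = {}"
    and t0: "distinct t0" "length t0 = p" "set t0 \<subseteq> {0..<k}"
    by (rule partially_addressable_aligned[OF ns])
  then interpret clifford_frame n A B u v g cx cz px pz
    by simp
  have "t0 ! 0 < k" "t0 ! 1 < k"
    using t0 \<open>1 < p\<close> by (metis atLeastLessThan_iff nth_mem subsetD less_trans zero_less_one)+
  then show False
    using not_X_to_XX[OF aligned act] on_tuples_X_to_XX[where U = U, OF I t0(1) _ U] t0(2) \<open>1 < p\<close> by blast
qed

end

text \<open>Entrywise, \<open>U X\<^sub>0 = Z\<^sub>0 U\<close> for \<open>H\<close> and \<open>PH\<close>, \<open>X\<^sub>0 U = U Z\<^sub>0\<close> for \<open>HP\<close> and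
  \<open>U X\<^sub>0 = X\<^sub>0 X\<^sub>1 U\<close> for \<open>CNOT\<close>.\<close>

lemma gate_H_X_to_Z: "gate_H w' (sdiff w {0}) = (if 0 \<in> w' then -1 else 1) * gate_H w' w"
  unfolding gate_H_def as_mat1_def by (cases "0 \<in> w'"; cases "0 \<in> w") (simp_all add: Hgate1_def)

lemma gate_PH_X_to_Z: "gate_PH w' (sdiff w {0}) = (if 0 \<in> w' then -1 else 1) * gate_PH w' w"
  unfolding gate_PH_def as_mat1_def
  by (cases "0 \<in> w'"; cases "0 \<in> w") (simp_all add: Hgate1_def Pgate1_def mmult1_expand)

lemma gate_HP_Z_to_X: "gate_HP (sdiff w' {0}) w = (if 0 \<in> w then -1 else 1) * gate_HP w' w"
  unfolding gate_HP_def as_mat1_def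
  by (cases "0 \<in> w'"; cases "0 \<in> w") (simp_all add: Hgate1_def Pgate1_def mmult1_expand)

lemma gate_CNOT_X_to_XX: "gate_CNOT w' (sdiff w {0}) = gate_CNOT (sdiff (sdiff w' {0}) {1}) w"
  unfolding gate_CNOT_def by (cases "0 \<in> w") (auto simp: set_eq_iff)

theorem proposition9:
  assumes "css_code n A B"
    and "non_splitting n A B"
    and "css_logicals n A B u v"
  shows "\<not> partially_addressable n A B u v 1 gate_H \<and>
         \<not> partially_addressable n A B u v 1 gate_PH \<and>
         \<not> partially_addressable n A B u v 1 gate_HP \<and>
         \<not> partially_addressable n A B u v 2 gate_CNOT"
proof -
  interpret css_with_logicals n A B u v
    using assms(1,3) by unfold_locales
  show ?thesis
    using not_partially_addressable_X_to_Z[where p = 1 and U = gate_H, OF assms(2) _ gate_H_X_to_Z]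
      not_partially_addressable_X_to_Z[where p = 1 and U = gate_PH, OF assms(2) _ gate_PH_X_to_Z]
      not_partially_addressable_Z_to_X[where p = 1 and U = gate_HP, OF assms(2) _ gate_HP_Z_to_X]
      not_partially_addressable_X_to_XX[where p = 2 and U = gate_CNOT, OF assms(2) _ gate_CNOT_X_to_XX]
    by simp
qed

end
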